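(* Let $q>1$, $0\le M_0<M$, let $u$ be a sufficiently smooth $L$-periodic solution of $u_t=-\alpha uu_x+\beta u_{xxx}$ on $[0,T]\times\mathbb{R}$, $r>\sup_{t,x}|u(t,x)|$. Assume $u^{(0)}_k=u(0,k\Delta x)$, that $u^{(0)},\dots,u^{(M_0+1)}$ are obtained successively as solutions of the scheme, that $\|u^{(m)}\|_\infty\le r$ for $m\le M_0$, that $\Delta t<\min\{\varepsilon_1(q,r,\Delta x),\varepsilon_2(q,r,\Delta x)\}$, and that $\|u^{(M_0+1)}\|_\infty\le qr$. Let $c_0>0$ be a constant independent of $\Delta t,\Delta x$ with $\|\tau^{(m)}\|,\|\delta^+_x\tau^{(m)}\|\le c_0((\Delta t)^2+(\Delta x)^2)$ for $m=0,\dots,M_0$. If $\Delta t\le\Delta x$, then for $m=0,\dots,M_0$, $$\delta^+_t\|\delta^+_x e^{(m)}\|^2\le -\delta^+_t A^{(m)} + C_2\,\mu^+_t\|e^{(m)}\|_{H^1}^2+\Big(\frac{|\alpha|}{6|\beta|}+1\Big)c_0^2\big((\Delta t)^2+(\Delta x)^2\big)^2,$$ where $A^{(m)}=\frac{\alpha}{3\beta}\sum_{k=1}^K (e^{(m)}_k)^3\Delta x$ and $C_2=C_2(q,r)>0$ is a constant independent of $\Delta t$ and $\Delta x$.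
   Context: $L>0$, $K\in\mathbb{N}$, $\Delta x=L/K$; $T>0$, $M\in\mathbb{N}$, $\Delta t=T/M$; $\alpha\in\mathbb{R}$, $\beta\ne0$. Grid functions are $K$-periodic real sequences. $\delta^+_x v_k=(v_{k+1}-v_k)/\Delta x$, $\delta^{\langle 1\rangle}_x v_k = (v_{k+1}-v_{k-1})/(2\Delta x)$, $\delta^{\langle 2\rangle}_x v_k = (v_{k+1}-2v_k+v_{k-1})/(\Delta x)^2$, $\|v\|=(\sum_{k=1}^K v_k^2\Delta x)^{1/2}$, $\|v\|_\infty=\max_k|v_k|$, $\|v\|_{H^1}=(\|v\|^2+\|\delta^+_xv\|^2)^{1/2}$; $\delta^+_t v^{(n)}=(v^{(n+1)}-v^{(n)})/\Delta t$, $\mu^+_t v^{(n)}=(v^{(n+1)}+v^{(n)})/2$, applied also to scalar sequences. The scheme: $u^{(n+1)}$ solves it at step $n$ if $\delta^+_t u^{(n)}_k = -\frac{\alpha}{6}\delta^{\langle 1\rangle}_x\{(u^{(n+1)}_k)^2 + u^{(n+1)}_k u^{(n)}_k + (u^{(n)}_k)^2\} + \beta\delta^{\langle 1\rangle}_x\delta^{\langle 2\rangle}_x \mu^+_t u^{(n)}_k$ for all $k$. $\varepsilon_1(q,r,\Delta x) = (q-1)(\Delta x)^3[\frac{|\alpha|}{6}(\Delta x)^2(q^2+q+1)r + \frac{3}{2}|\beta|(q+1)]^{-1}$, $\varepsilon_2(q,r,\Delta x) = (\Delta x)^3[\frac{|\alpha|}{6}(\Delta x)^2(2q+1)r + \frac{3}{2}|\beta|]^{-1}$.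 $\tilde u^{(m)}_k=u(m\Delta t,k\Delta x)$, $e^{(m)}=u^{(m)}-\tilde u^{(m)}$, and the truncation error $\tau^{(m)}$ is defined by $\delta^+_t \tilde u^{(m)}_k = -\frac{\alpha}{6}\delta^{\langle 1\rangle}_x\{(\tilde u^{(m+1)}_k)^2 + \tilde u^{(m+1)}_k \tilde u^{(m)}_k + (\tilde u^{(m)}_k)^2\} + \beta\delta^{\langle 1\rangle}_x\delta^{\langle 2\rangle}_x \mu^+_t \tilde u^{(m)}_k+\tau^{(m)}_k$. *)

theory Defs
  imports "HOL-Analysis.Analysis"
begin

definition periodic_grid :: "nat \<Rightarrow> (int \<Rightarrow> real) \<Rightarrow> bool" where
  "periodic_grid K v \<longleftrightarrow> (\<forall>k. v (k + int K) = v k)"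

definition dxp :: "real \<Rightarrow> (int \<Rightarrow> real) \<Rightarrow> int \<Rightarrow> real" where
  "dxp dx v k = (v (k + 1) - v k) / dx"

definition dx1 :: "real \<Rightarrow> (int \<Rightarrow> real) \<Rightarrow> int \<Rightarrow> real" where
  "dx1 dx v k = (v (k + 1) - v (k - 1)) / (2 * dx)"

definition dx2 :: "real \<Rightarrow> (int \<Rightarrow> real) \<Rightarrow> int \<Rightarrow> real" where
  "dx2 dx v k = (v (k + 1) - 2 * v k + v (k - 1)) / dx ^ 2"

definition gnorm :: "nat \<Rightarrow> real \<Rightarrow> (int \<Rightarrow> real) \<Rightarrow> real" where
  "gnorm K dx v = sqrt (\<Sum>k = 1..int K. (v k)^2 * dx)"

definition supnorm :: "nat \<Rightarrow> (int \<Rightarrow> real) \<Rightarrow> real" where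
  "supnorm K v = Max ((\<lambda>k. \<bar>v k\<bar>) ` {1..int K})"

definition h1norm :: "nat \<Rightarrow> real \<Rightarrow> (int \<Rightarrow> real) \<Rightarrow> real" where
  "h1norm K dx v = sqrt ((gnorm K dx v)^2 + (gnorm K dx (dxp dx v))^2)"

definition dtp :: "real \<Rightarrow> (nat \<Rightarrow> real) \<Rightarrow> nat \<Rightarrow> real" where
  "dtp dt a n = (a (Suc n) - a n) / dt"

definition mutp :: "(nat \<Rightarrow> real) \<Rightarrow> nat \<Rightarrow> real" where
  "mutp a n = (a (Suc n) + a n) / 2"

text \<open>w = u^(n+1) solves the scheme at step n with v = u^(n).\<close>
definition scheme_step :: "real \<Rightarrow> real \<Rightarrow> real \<Rightarrow> real \<Rightarrow> (int \<Rightarrow> real) \<Rightarrow> (int \<Rightarrow> real) \<Rightarrow> bool" where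
  "scheme_step \<alpha> \<beta> dx dt v w \<longleftrightarrow>
     (\<forall>k. (w k - v k) / dt =
        - \<alpha> / 6 * dx1 dx (\<lambda>j. (w j)^2 + w j * v j + (v j)^2) k
        + \<beta> * dx1 dx (dx2 dx (\<lambda>j. (w j + v j) / 2)) k)"

text \<open>Truncation error of the exact solution grid values ut (ut m k = u(m dt, k dx)).\<close>
definition trunc_err :: "real \<Rightarrow> real \<Rightarrow> real \<Rightarrow> real \<Rightarrow> (nat \<Rightarrow> int \<Rightarrow> real) \<Rightarrow> nat \<Rightarrow> int \<Rightarrow> real" where
  "trunc_err \<alpha> \<beta> dx dt ut m k =
     (ut (Suc m) k - ut m k) / dt
     - ( - \<alpha> / 6 * dx1 dx (\<lambda>j. (ut (Suc m) j)^2 + ut (Suc m) j * ut m j + (ut m j)^2) k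
         + \<beta> * dx1 dx (dx2 dx (\<lambda>j. (ut (Suc m) j + ut m j) / 2)) k)"

definition eps1 :: "real \<Rightarrow> real \<Rightarrow> real \<Rightarrow> real \<Rightarrow> real \<Rightarrow> real" where
  "eps1 \<alpha> \<beta> q r dx = (q - 1) * dx ^ 3 /
     (\<bar>\<alpha>\<bar> / 6 * dx ^ 2 * (q^2 + q + 1) * r + 3 / 2 * \<bar>\<beta>\<bar> * (q + 1))"

definition eps2 :: "real \<Rightarrow> real \<Rightarrow> real \<Rightarrow> real \<Rightarrow> real \<Rightarrow> real" where
  "eps2 \<alpha> \<beta> q r dx = dx ^ 3 /
     (\<bar>\<alpha>\<bar> / 6 * dx ^ 2 * (2 * q + 1) * r + 3 / 2 * \<bar>\<beta>\<bar>)"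

definition smooth_kdv_solution :: "real \<Rightarrow> real \<Rightarrow> real \<Rightarrow> real \<Rightarrow> (real \<Rightarrow> real \<Rightarrow> real) \<Rightarrow> bool" where
  "smooth_kdv_solution \<alpha> \<beta> L T u \<longleftrightarrow>
     (\<forall>t x. u t (x + L) = u t x) \<and>
     (\<exists>ut ux uxx uxxx :: real \<Rightarrow> real \<Rightarrow> real.
        continuous_on ({0..T} \<times> UNIV) (\<lambda>(t, x). u t x) \<and>
        continuous_on ({0..T} \<times> UNIV) (\<lambda>(t, x). ut t x) \<and>
        continuous_on ({0..T} \<times> UNIV) (\<lambda>(t, x). ux t x) \<and>
        continuous_on ({0..T} \<times> UNIV) (\<lambda>(t, x). uxx t x) \<and>
        continuous_on ({0..T} \<times> UNIV) (\<lambda>(t, x). uxxx t x) \<and>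
        (\<forall>t\<in>{0..T}. \<forall>x.
           ((\<lambda>s. u s x) has_real_derivative ut t x) (at t within {0..T}) \<and>
           ((\<lambda>y. u t y) has_real_derivative ux t x) (at x) \<and>
           ((\<lambda>y. ux t y) has_real_derivative uxx t x) (at x) \<and>
           ((\<lambda>y. uxx t y) has_real_derivative uxxx t x) (at x) \<and>
           ut t x = - \<alpha> * u t x * ux t x + \<beta> * uxxx t x))"

end

theory Submission
  imports Defs
begin

(* Write e, e' for the errors at two consecutive time levels, f = (e + e') / 2 and
   S = e'^2 + e' e + e^2.  Subtracting the scheme for the exact solution from the scheme gives an
   error equation forced by the truncation error.  Testing it with -2 dx2 f yields the time
   difference of ||dxp e||^2, but the nonlinearity then contributes alpha/3 <dx2 f, dx1 S>, which
   the H^1 norm of the errors does not control.  Testing also with alpha/(3 beta) S cancels this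
   term against the dispersive one and produces the time difference of the cubic functional A.
   The remaining terms are bounded by summation by parts: those linear in the errors through the
   smoothness of u (differences of the sampled solution are O(dx), second differences O(dx^2),
   time differences O(dt) = O(dx^3) because dt < eps2), the quadratic one through the a priori
   bound |u^(m)| <= q r, and the truncation error by Cauchy-Schwarz. *)

section \<open>Periodic grid functions and the discrete inner product\<close>

lemma periodic_grid_add_period:
  assumes "periodic_grid K v"
  shows "v (k + int K) = v k" "v (k + int K + j) = v (k + j)" "v (k + int K - j) = v (k - j)"
    "v (j + (k + int K)) = v (j + k)"
  using assms unfolding periodic_grid_def
  by (metis add.commute add.left_commute, metis add.commute add.left_commute,
      metis add_diff_eq diff_add_eq, metis add.assoc)

lemma periodic_grid_add_multiple:
  assumes "periodic_grid K v"
  shows "v (k + n * int K) = v k"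
proof (induction n rule: int_induct[where k = 0])
  case (step1 i)
  have "v (k + (i + 1) * int K) = v ((k + i * int K) + int K)" by (simp add: algebra_simps)
  with assms step1 show ?case by (simp add: periodic_grid_def)
next
  case (step2 i)
  have "v (k + i * int K) = v ((k + (i - 1) * int K) + int K)" by (simp add: algebra_simps)
  with assms step2 show ?case by (simp add: periodic_grid_def)
qed simp

lemma abs_le_supnorm_periodic:
  assumes "periodic_grid K v" and "K > 0"
  shows "\<bar>v k\<bar> \<le> supnorm K v"
proof -
  define j where "j = (k - 1) mod int K + 1"
  have "int K > 0" using \<open>K > 0\<close> by simp
  then have j: "j \<in> {1..int K}"
    using pos_mod_bound pos_mod_sign unfolding j_def by (metis atLeastAtMost_iff le_add_same_cancel2 zless_imp_add1_zle)
  have "k = j + ((k - 1) div int K) * int K" by (simp add: j_def algebra_simps)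
  then have "v k = v j" using periodic_grid_add_multiple[OF assms(1)] by metis
  also have "\<bar>v j\<bar> \<le> supnorm K v" unfolding supnorm_def using j by (intro Max_ge) auto
  finally show ?thesis .
qed

lemma periodic_sum_shift_one:
  assumes "periodic_grid K h"
  shows "(\<Sum>k=1..int K. h (k + 1)) = (\<Sum>k=1..int K. h k)"
proof (cases "K = 0")
  case False
  have "(\<Sum>k=1..int K. h (k + 1)) = (\<Sum>k=2..int K + 1. h k)"
    by (rule sum.reindex_bij_witness[of _ "\<lambda>k. k - 1" "\<lambda>k. k + 1"]) auto
  also have "{2..int K + 1} = insert (int K + 1) {2..int K}" using False by auto
  also have "(\<Sum>k\<in>insert (int K + 1) {2..int K}. h k) = h (int K + 1) + (\<Sum>k=2..int K. h k)"
    by simp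
  also have "h (int K + 1) = h 1" using periodic_grid_add_period(1)[OF assms, of 1] by (simp add: add.commute)
  also have "h 1 + (\<Sum>k=2..int K. h k) = (\<Sum>k=1..int K. h k)"
  proof -
    have "{1..int K} = insert 1 {2..int K}" using False by auto
    then show ?thesis by simp
  qed
  finally show ?thesis .
qed simp

lemma periodic_grid_shift:
  assumes "periodic_grid K v"
  shows "periodic_grid K (\<lambda>k. v (k + j))"
  using assms unfolding periodic_grid_def by (metis add.assoc add.commute)

lemma periodic_sum_shift_pm:
  assumes "periodic_grid K h"
  shows "(\<Sum>k=1..int K. h (k + 1)) = (\<Sum>k=1..int K. h k)"
    and "(\<Sum>k=1..int K. h (k - 1)) = (\<Sum>k=1..int K. h k)"
  using periodic_sum_shift_one[OF assms] periodic_sum_shift_one[OF periodic_grid_shift[OF assms, of "-1"]]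
  by simp_all

lemma periodic_sum_central_diff_mult:
  assumes a: "periodic_grid K a" and b: "periodic_grid K b"
  shows "(\<Sum>k=1..int K. (a (k+1) - a (k-1)) * b k) = - (\<Sum>k=1..int K. a k * (b (k+1) - b (k-1)))"
proof -
  note a_per = periodic_grid_add_period[OF a] and b_per = periodic_grid_add_period[OF b]
  have "(\<Sum>k=1..int K. a (k+1) * b k) = (\<Sum>k=1..int K. a k * b (k-1))"
    using periodic_sum_shift_pm(1)[of K "\<lambda>k. a k * b (k-1)"] by (simp add: periodic_grid_def a_per b_per)
  moreover have "(\<Sum>k=1..int K. a (k-1) * b k) = (\<Sum>k=1..int K. a k * b (k+1))"
    using periodic_sum_shift_pm(2)[of K "\<lambda>k. a k * b (k+1)"] by (simp add: periodic_grid_def a_per b_per)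
  ultimately show ?thesis by (simp add: algebra_simps sum_subtractf)
qed

lemma periodic_sum_central_diff_self:
  assumes "periodic_grid K a"
  shows "(\<Sum>k=1..int K. (a (k+1) - a (k-1)) * a k) = 0"
  using periodic_sum_central_diff_mult[OF assms assms] by (simp add: mult.commute)

lemma periodic_sum_backward_diff_mult:
  assumes a: "periodic_grid K a" and b: "periodic_grid K b"
  shows "(\<Sum>k=1..int K. a k * (b k - b (k-1))) = - (\<Sum>k=1..int K. (a (k+1) - a k) * b k)"
proof -
  have "(\<Sum>k=1..int K. a k * b (k-1)) = (\<Sum>k=1..int K. a (k+1) * b k)"
    using periodic_sum_shift_pm(2)[of K "\<lambda>k. a (k+1) * b k"]
    by (simp add: periodic_grid_def periodic_grid_add_period[OF a] periodic_grid_add_period[OF b])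
  then show ?thesis by (simp add: algebra_simps sum_subtractf)
qed

lemma periodic_sum_power2_shift:
  assumes "periodic_grid K a"
  shows "(\<Sum>k=1..int K. (a (k+1))^2) = (\<Sum>k=1..int K. (a k)^2)"
    and "(\<Sum>k=1..int K. (a (k-1))^2) = (\<Sum>k=1..int K. (a k)^2)"
  using periodic_sum_shift_pm[of K "\<lambda>k. (a k)^2"]
  by (simp_all add: periodic_grid_def periodic_grid_add_period[OF assms])

definition grid_inner :: "nat \<Rightarrow> real \<Rightarrow> (int \<Rightarrow> real) \<Rightarrow> (int \<Rightarrow> real) \<Rightarrow> real" where
  "grid_inner K dx a b = dx * (\<Sum>k=1..int K. a k * b k)"

lemma gnorm_power2: "dx \<ge> 0 \<Longrightarrow> (gnorm K dx v)^2 = dx * (\<Sum>k=1..int K. (v k)^2)"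
  unfolding gnorm_def by (simp add: sum_nonneg sum_distrib_left mult.commute)

lemma h1norm_power2: "(h1norm K dx v)^2 = (gnorm K dx v)^2 + (gnorm K dx (dxp dx v))^2"
  unfolding h1norm_def by simp

lemma periodic_grid_mid:
  "periodic_grid K a \<Longrightarrow> periodic_grid K b \<Longrightarrow> periodic_grid K (\<lambda>k. (a k + b k) / 2)"
  by (simp add: periodic_grid_def)

lemma periodic_grid_dxp: "periodic_grid K v \<Longrightarrow> periodic_grid K (dxp dx v)"
  by (simp add: periodic_grid_def dxp_def periodic_grid_add_period)

lemma periodic_grid_dx1: "periodic_grid K v \<Longrightarrow> periodic_grid K (dx1 dx v)"
  by (simp add: periodic_grid_def dx1_def periodic_grid_add_period)

lemma periodic_grid_dx2: "periodic_grid K v \<Longrightarrow> periodic_grid K (dx2 dx v)"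
  by (simp add: periodic_grid_def dx2_def periodic_grid_add_period)

lemma dx1_diff: "dx1 dx (\<lambda>j. a j - b j) k = dx1 dx a k - dx1 dx b k"
  by (simp add: dx1_def diff_divide_distrib)

lemma dx1_add: "dx1 dx (\<lambda>j. a j + b j) k = dx1 dx a k + dx1 dx b k"
  by (simp add: dx1_def add_divide_distrib[symmetric] algebra_simps)

lemma dx2_diff: "dx2 dx (\<lambda>j. a j - b j) k = dx2 dx a k - dx2 dx b k"
  by (simp add: dx2_def diff_divide_distrib[symmetric] algebra_simps)

lemma grid_inner_commute: "grid_inner K dx a b = grid_inner K dx b a"
  by (simp add: grid_inner_def mult.commute)

lemma grid_inner_dx1_left:
  assumes "periodic_grid K a" and "periodic_grid K b"
  shows "grid_inner K dx (dx1 dx a) b = - grid_inner K dx a (dx1 dx b)"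
proof -
  have "grid_inner K dx (dx1 dx a) b = dx / (2 * dx) * (\<Sum>k=1..int K. (a (k+1) - a (k-1)) * b k)"
    "grid_inner K dx a (dx1 dx b) = dx / (2 * dx) * (\<Sum>k=1..int K. a k * (b (k+1) - b (k-1)))"
    by (simp_all add: grid_inner_def dx1_def sum_divide_distrib[symmetric] sum_distrib_left[symmetric])
  then show ?thesis using periodic_sum_central_diff_mult[OF assms] by simp
qed

lemma grid_inner_dx1_self: "periodic_grid K a \<Longrightarrow> grid_inner K dx (dx1 dx a) a = 0"
  using grid_inner_dx1_left[of K a a dx] grid_inner_commute[of K dx a "dx1 dx a"] by simp

lemma grid_inner_dx2_right:
  assumes pa: "periodic_grid K a" and pb: "periodic_grid K b" and dx: "dx > 0"
  shows "grid_inner K dx a (dx2 dx b) = - grid_inner K dx (dxp dx a) (dxp dx b)"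
proof -
  have "grid_inner K dx a (dx2 dx b) = (\<Sum>k=1..int K. a k * (dxp dx b k - dxp dx b (k-1)))"
    using dx by (simp add: grid_inner_def sum_distrib_left dx2_def dxp_def field_simps power2_eq_square)
  also have "\<dots> = - (\<Sum>k=1..int K. (a (k+1) - a k) * dxp dx b k)"
    by (rule periodic_sum_backward_diff_mult[OF pa periodic_grid_dxp[OF pb]])
  also have "\<dots> = - grid_inner K dx (dxp dx a) (dxp dx b)"
    using dx by (simp add: grid_inner_def sum_distrib_left dxp_def)
  finally show ?thesis .
qed

lemma grid_inner_linear_left:
  "grid_inner K dx (\<lambda>k. a k + b k) w = grid_inner K dx a w + grid_inner K dx b w"
  "grid_inner K dx (\<lambda>k. a k - b k) w = grid_inner K dx a w - grid_inner K dx b w"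
  "grid_inner K dx (\<lambda>k. c * a k) w = c * grid_inner K dx a w"
  by (simp_all add: grid_inner_def algebra_simps sum.distrib sum_subtractf sum_distrib_left)

section \<open>The discrete energy identity\<close>

definition trinomial :: "(int \<Rightarrow> real) \<Rightarrow> (int \<Rightarrow> real) \<Rightarrow> int \<Rightarrow> real" where
  "trinomial v w = (\<lambda>k. (w k)^2 + w k * v k + (v k)^2)"

definition trinomial_lin :: "(int \<Rightarrow> real) \<Rightarrow> (int \<Rightarrow> real) \<Rightarrow> (int \<Rightarrow> real) \<Rightarrow> (int \<Rightarrow> real) \<Rightarrow> int \<Rightarrow> real" where
  "trinomial_lin V W e e' = (\<lambda>k. 2 * W k * e' k + W k * e k + V k * e' k + 2 * V k * e k)"

lemma trinomial_add:
  "trinomial (\<lambda>k. V k + e k) (\<lambda>k. W k + e' k) k = trinomial V W k + trinomial_lin V W e e' k + trinomial e e' k"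
  by (simp add: trinomial_def trinomial_lin_def power2_eq_square algebra_simps)

definition scheme_residual :: "real \<Rightarrow> real \<Rightarrow> real \<Rightarrow> real \<Rightarrow> (int \<Rightarrow> real) \<Rightarrow> (int \<Rightarrow> real) \<Rightarrow> int \<Rightarrow> real" where
  "scheme_residual \<alpha> \<beta> dx dt v w k = (w k - v k) / dt
     - (- \<alpha> / 6 * dx1 dx (trinomial v w) k + \<beta> * dx1 dx (dx2 dx (\<lambda>j. (w j + v j) / 2)) k)"

lemma scheme_step_iff_residual:
  "scheme_step \<alpha> \<beta> dx dt v w \<longleftrightarrow> (\<forall>k. scheme_residual \<alpha> \<beta> dx dt v w k = 0)"
  by (simp add: scheme_step_def scheme_residual_def trinomial_def)

lemma trunc_err_eq_residual:
  "trunc_err \<alpha> \<beta> dx dt ut m = scheme_residual \<alpha> \<beta> dx dt (ut m) (ut (Suc m))"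
  by (simp add: fun_eq_iff trunc_err_def scheme_residual_def trinomial_def)

lemma periodic_grid_scheme_residual:
  "periodic_grid K v \<Longrightarrow> periodic_grid K w \<Longrightarrow> periodic_grid K (scheme_residual \<alpha> \<beta> dx dt v w)"
  by (simp add: periodic_grid_def scheme_residual_def dx1_def dx2_def trinomial_def periodic_grid_add_period)

lemma scheme_error_equation:
  fixes V W :: "int \<Rightarrow> real"
  assumes "scheme_step \<alpha> \<beta> dx dt v w"
  defines "e \<equiv> \<lambda>k. v k - V k" and "e' \<equiv> \<lambda>k. w k - W k"
  shows "(e' k - e k) / dt = - \<alpha> / 6 * dx1 dx (\<lambda>j. trinomial_lin V W e e' j + trinomial e e' j) k
    + \<beta> * dx1 dx (dx2 dx (\<lambda>j. (e j + e' j) / 2)) k - scheme_residual \<alpha> \<beta> dx dt V W k"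
proof -
  have sch: "(w k - v k) / dt = - \<alpha> / 6 * dx1 dx (trinomial v w) k + \<beta> * dx1 dx (dx2 dx (\<lambda>j. (w j + v j) / 2)) k"
    using assms(1) unfolding scheme_step_iff_residual scheme_residual_def by (metis eq_iff_diff_eq_0)
  have "(\<lambda>j. trinomial_lin V W e e' j + trinomial e e' j) = (\<lambda>j. trinomial v w j - trinomial V W j)"
    using trinomial_add[of V e W e'] by (simp add: e_def e'_def fun_eq_iff)
  then have N: "dx1 dx (\<lambda>j. trinomial_lin V W e e' j + trinomial e e' j) k = dx1 dx (trinomial v w) k - dx1 dx (trinomial V W) k"
    by (simp add: dx1_diff)
  have mid: "(\<lambda>j. (e j + e' j) / 2) = (\<lambda>j. (w j + v j) / 2 - (W j + V j) / 2)"
    by (simp add: e_def e'_def fun_eq_iff field_simps)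
  have "dx2 dx (\<lambda>j. (e j + e' j) / 2) = (\<lambda>j. dx2 dx (\<lambda>j. (w j + v j) / 2) j - dx2 dx (\<lambda>j. (W j + V j) / 2) j)"
    unfolding mid by (rule ext) (rule dx2_diff)
  then have D: "dx1 dx (dx2 dx (\<lambda>j. (e j + e' j) / 2)) k
      = dx1 dx (dx2 dx (\<lambda>j. (w j + v j) / 2)) k - dx1 dx (dx2 dx (\<lambda>j. (W j + V j) / 2)) k"
    by (simp add: dx1_diff)
  have "(e' k - e k) / dt = (w k - v k) / dt - (W k - V k) / dt"
    by (simp add: e_def e'_def diff_divide_distrib)
  then show ?thesis
    unfolding N D sch scheme_residual_def by (simp add: algebra_simps)
qed

lemma periodic_grid_trinomial:
  "periodic_grid K v \<Longrightarrow> periodic_grid K w \<Longrightarrow> periodic_grid K (trinomial v w)"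
  by (simp add: periodic_grid_def trinomial_def)

lemma grid_energy_difference:
  assumes dx: "dx > 0" and dt: "dt > 0" and pe: "periodic_grid K e" and pe': "periodic_grid K e'"
  shows "((gnorm K dx (dxp dx e'))^2 - (gnorm K dx (dxp dx e))^2) / dt
    = - 2 * grid_inner K dx (\<lambda>k. (e' k - e k) / dt) (dx2 dx (\<lambda>k. (e k + e' k) / 2))"
proof -
  define E where "E = (\<lambda>k. (e' k - e k) / dt)"
  define f where "f = (\<lambda>k. (e k + e' k) / 2)"
  have pE: "periodic_grid K E" using pe pe' by (simp add: periodic_grid_def E_def)
  have pf: "periodic_grid K f" unfolding f_def by (rule periodic_grid_mid[OF pe pe'])
  have step: "((dxp dx e' k)^2 - (dxp dx e k)^2) / dt = 2 * (dxp dx E k * dxp dx f k)" for k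
  proof -
    have "(dxp dx e' k)^2 - (dxp dx e k)^2 = (dxp dx e' k - dxp dx e k) * (dxp dx e k + dxp dx e' k)"
      by (simp add: power2_eq_square algebra_simps)
    also have "dxp dx e' k - dxp dx e k = dt * dxp dx E k" using dt dx by (simp add: dxp_def E_def field_simps)
    also have "dxp dx e k + dxp dx e' k = 2 * dxp dx f k" using dx by (simp add: dxp_def f_def field_simps)
    finally show ?thesis using dt by simp
  qed
  have "((gnorm K dx (dxp dx e'))^2 - (gnorm K dx (dxp dx e))^2) / dt
      = dx * (\<Sum>k=1..int K. ((dxp dx e' k)^2 - (dxp dx e k)^2) / dt)"
    using dx by (simp add: gnorm_power2 sum_subtractf diff_divide_distrib sum_divide_distrib[symmetric] right_diff_distrib)
  also have "\<dots> = 2 * grid_inner K dx (dxp dx E) (dxp dx f)"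
    unfolding step grid_inner_def by (simp add: sum_distrib_left mult_ac)
  finally show ?thesis using grid_inner_dx2_right[OF pE pf dx] unfolding E_def f_def by simp
qed

lemma grid_cubic_difference:
  assumes "dt > 0"
  shows "((\<Sum>k=1..int K. (e' k)^3 * dx) - (\<Sum>k=1..int K. (e k)^3 * dx)) / dt
    = grid_inner K dx (\<lambda>k. (e' k - e k) / dt) (trinomial e e')"
proof -
  have "((\<Sum>k=1..int K. (e' k)^3 * dx) - (\<Sum>k=1..int K. (e k)^3 * dx)) / dt
      = (\<Sum>k=1..int K. ((e' k)^3 * dx - (e k)^3 * dx) / dt)"
    by (simp add: sum_divide_distrib[symmetric] sum_subtractf)
  also have "\<dots> = (\<Sum>k=1..int K. dx * ((e' k - e k) / dt * trinomial e e' k))"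
    using assms by (intro sum.cong) (simp_all add: trinomial_def field_simps power3_eq_cube power2_eq_square)
  finally show ?thesis by (simp add: grid_inner_def sum_distrib_left)
qed

lemma discrete_energy_identity:
  fixes e e' Lf \<tau> :: "int \<Rightarrow> real"
  defines "f \<equiv> \<lambda>k. (e k + e' k) / 2" and "S \<equiv> trinomial e e'"
  assumes dx: "dx > 0" and dt: "dt > 0" and \<beta>: "\<beta> \<noteq> 0"
    and pe: "periodic_grid K e" and pe': "periodic_grid K e'"
    and pL: "periodic_grid K Lf" and p\<tau>: "periodic_grid K \<tau>"
    and err: "\<And>k. (e' k - e k) / dt = - \<alpha> / 6 * dx1 dx (\<lambda>j. Lf j + S j) k + \<beta> * dx1 dx (dx2 dx f) k - \<tau> k"
  shows "((gnorm K dx (dxp dx e'))^2 - (gnorm K dx (dxp dx e))^2) / dt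
      + (\<alpha> / (3*\<beta>) * (\<Sum>k=1..int K. (e' k)^3 * dx) - \<alpha> / (3*\<beta>) * (\<Sum>k=1..int K. (e k)^3 * dx)) / dt
    = \<alpha> / 3 * grid_inner K dx (dx2 dx f) (dx1 dx Lf) + \<alpha>^2 / (18*\<beta>) * grid_inner K dx Lf (dx1 dx S)
      - \<alpha> / (3*\<beta>) * grid_inner K dx \<tau> S - 2 * grid_inner K dx (dxp dx \<tau>) (dxp dx f)"
proof -
  define E where "E = (\<lambda>k. (e' k - e k) / dt)"
  define y where "y = dx2 dx f"
  define a where "a = \<alpha> / (3*\<beta>)"
  have pf: "periodic_grid K f" unfolding f_def by (rule periodic_grid_mid[OF pe pe'])
  have py: "periodic_grid K y" unfolding y_def by (rule periodic_grid_dx2[OF pf])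
  have pS: "periodic_grid K S" unfolding S_def by (rule periodic_grid_trinomial[OF pe pe'])
  have E_eq: "E = (\<lambda>k. (- (\<alpha> / 6)) * dx1 dx Lf k - (\<alpha> / 6) * dx1 dx S k + \<beta> * dx1 dx y k - \<tau> k)"
    using err by (simp add: fun_eq_iff E_def y_def dx1_add algebra_simps)
  have inner_E: "grid_inner K dx E w = - (\<alpha> / 6) * grid_inner K dx (dx1 dx Lf) w - (\<alpha> / 6) * grid_inner K dx (dx1 dx S) w
      + \<beta> * grid_inner K dx (dx1 dx y) w - grid_inner K dx \<tau> w" for w
    unfolding E_eq grid_inner_linear_left by simp
  have "((gnorm K dx (dxp dx e'))^2 - (gnorm K dx (dxp dx e))^2) / dt
      + (a * (\<Sum>k=1..int K. (e' k)^3 * dx) - a * (\<Sum>k=1..int K. (e k)^3 * dx)) / dt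
      = - 2 * grid_inner K dx E y + a * grid_inner K dx E S"
    unfolding right_diff_distrib[symmetric] times_divide_eq_right[symmetric] grid_cubic_difference[OF dt]
      grid_energy_difference[OF dx dt pe pe'] E_def y_def f_def S_def ..
  also have "\<dots> = \<alpha> / 3 * grid_inner K dx y (dx1 dx Lf) + (\<alpha> * a / 6) * grid_inner K dx Lf (dx1 dx S)
      + (\<alpha> / 3 - a * \<beta>) * grid_inner K dx y (dx1 dx S) - a * grid_inner K dx \<tau> S + 2 * grid_inner K dx \<tau> y"
    unfolding inner_E grid_inner_dx1_self[OF py] grid_inner_dx1_self[OF pS]
      grid_inner_dx1_left[OF pL pS] grid_inner_dx1_left[OF py pS]
    by (simp add: grid_inner_commute[of K dx "dx1 dx _" y] algebra_simps)
  finally have eq: "((gnorm K dx (dxp dx e'))^2 - (gnorm K dx (dxp dx e))^2) / dt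
      + (a * (\<Sum>k=1..int K. (e' k)^3 * dx) - a * (\<Sum>k=1..int K. (e k)^3 * dx)) / dt
      = \<alpha> / 3 * grid_inner K dx y (dx1 dx Lf) + (\<alpha> * a / 6) * grid_inner K dx Lf (dx1 dx S)
      + (\<alpha> / 3 - a * \<beta>) * grid_inner K dx y (dx1 dx S) - a * grid_inner K dx \<tau> S + 2 * grid_inner K dx \<tau> y" .
  have coeff: "a * \<beta> = \<alpha> / 3" "\<alpha> * a / 6 = \<alpha>^2 / (18*\<beta>)"
    using \<beta> by (simp_all add: a_def power2_eq_square)
  show ?thesis
    using eq[unfolded coeff grid_inner_dx2_right[OF p\<tau> pf dx, folded y_def]] unfolding a_def y_def by simp
qed

section \<open>Estimates of the coupling terms\<close>

lemma abs_mult_le_half_sum_squares: "\<bar>x\<bar> * \<bar>y\<bar> \<le> ((x::real)^2 + y^2) / 2"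
  using sum_squares_bound[of "\<bar>x\<bar>" "\<bar>y\<bar>"] by simp

lemma power2_sum_le_twice: "((a::real) + b)^2 \<le> 2 * (a^2 + b^2)"
  using sum_squares_bound[of a b] by (simp add: power2_sum)

lemma abs_mult_mult_le_half_sum_squares:
  assumes "\<bar>A\<bar> \<le> (c::real)"
  shows "\<bar>A * x * y\<bar> \<le> c * ((x^2 + y^2) / 2)"
proof -
  have "\<bar>A * x * y\<bar> = \<bar>A\<bar> * (\<bar>x\<bar> * \<bar>y\<bar>)" by (simp add: abs_mult)
  also have "\<dots> \<le> c * (\<bar>x\<bar> * \<bar>y\<bar>)" using assms by (simp add: mult_right_mono)
  also have "\<dots> \<le> c * ((x^2 + y^2) / 2)"
    using assms by (intro mult_left_mono[OF abs_mult_le_half_sum_squares]) linarith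
  finally show ?thesis .
qed

lemma mult_le_abs_mult_bound:
  assumes "\<bar>p\<bar> \<le> (B::real)"
  shows "x * p \<le> \<bar>x\<bar> * B"
proof -
  have "x * p \<le> \<bar>x\<bar> * \<bar>p\<bar>" by (metis abs_ge_self abs_mult)
  also have "\<dots> \<le> \<bar>x\<bar> * B" using assms by (rule mult_left_mono) simp
  finally show ?thesis .
qed

lemma abs_sum_le_sum:
  assumes "\<And>k. \<bar>h k\<bar> \<le> b k"
  shows "\<bar>\<Sum>k\<in>A. h k\<bar> \<le> (\<Sum>k\<in>A. (b k::real))"
  by (rule order_trans[OF sum_abs]) (simp add: assms sum_mono)

definition leibniz_remainder :: "real \<Rightarrow> (int \<Rightarrow> real) \<Rightarrow> (int \<Rightarrow> real) \<Rightarrow> int \<Rightarrow> real" where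
  "leibniz_remainder dx P f k =
     ((P (k+2) - P (k+1)) * dxp dx f (k+1)
      + ((P (k+2) - P (k+1)) * f (k+1) - (P k - P (k-1)) * f (k-1)) / dx) * dxp dx f k / 2"

text \<open>Summation by parts twice moves all differences in \<open>\<langle>\<delta>\<^sup>2 f, \<delta>\<^sup>1 (P f)\<rangle>\<close> away from the
  highest derivative of \<open>f\<close>, leaving only differences of the coefficient \<open>P\<close>.\<close>
lemma grid_inner_dx2_dx1_mult_eq:
  assumes pP: "periodic_grid K P" and pf: "periodic_grid K f" and dx: "dx > 0"
  shows "grid_inner K dx (dx2 dx f) (dx1 dx (\<lambda>j. P j * f j)) = - (\<Sum>k=1..int K. leibniz_remainder dx P f k)"
proof -
  define g where "g = dxp dx f"
  define Z where "Z = dx1 dx (\<lambda>j. P j * f j)"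
  have pg: "periodic_grid K g" unfolding g_def by (rule periodic_grid_dxp[OF pf])
  have pZ: "periodic_grid K Z" unfolding Z_def
    by (rule periodic_grid_dx1) (use pP pf in \<open>simp add: periodic_grid_def\<close>)
  have "grid_inner K dx (dx2 dx f) Z = (\<Sum>k=1..int K. Z k * (g k - g (k-1)))"
    using dx by (simp add: grid_inner_def sum_distrib_left g_def dx2_def dxp_def field_simps power2_eq_square)
  also have "\<dots> = - (\<Sum>k=1..int K. (Z (k+1) - Z k) * g k)"
    by (rule periodic_sum_backward_diff_mult[OF pZ pg])
  also have "(\<Sum>k=1..int K. (Z (k+1) - Z k) * g k) =
      (\<Sum>k=1..int K. P (k+2) * g (k+1) * g k / 2) - (\<Sum>k=1..int K. P k * g (k-1) * g k / 2)
      + (\<Sum>k=1..int K. ((P (k+2) - P (k+1)) * f (k+1) - (P k - P (k-1)) * f (k-1)) / dx * g k / 2)"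
  proof -
    have "(Z (k+1) - Z k) * g k = P (k+2) * g (k+1) * g k / 2 - P k * g (k-1) * g k / 2
        + ((P (k+2) - P (k+1)) * f (k+1) - (P k - P (k-1)) * f (k-1)) / dx * g k / 2" for k
      using dx by (simp add: Z_def dx1_def g_def dxp_def field_simps)
    then show ?thesis by (simp add: sum.distrib sum_subtractf)
  qed
  also have "(\<Sum>k=1..int K. P k * g (k-1) * g k / 2) = (\<Sum>k=1..int K. P (k+1) * g k * g (k+1) / 2)"
    using periodic_sum_shift_pm(1)[of K "\<lambda>k. P k * g (k-1) * g k / 2"]
    by (simp add: periodic_grid_def periodic_grid_add_period[OF pP] periodic_grid_add_period[OF pg])
  finally show ?thesis
    unfolding Z_def leibniz_remainder_def g_def[symmetric]
    by (simp add: sum_subtractf[symmetric] sum.distrib[symmetric] algebra_simps add_divide_distrib diff_divide_distrib)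
qed

lemma abs_leibniz_remainder_le:
  assumes dx: "dx > 0" and B1: "B1 \<ge> 0" and B2: "B2 \<ge> 0"
    and h1: "\<forall>k. \<bar>P (k+1) - P k\<bar> \<le> B1 * dx"
    and h2: "\<forall>k. \<bar>P (k+1) - 2 * P k + P (k-1)\<bar> \<le> B2 * dx^2"
  shows "\<bar>leibniz_remainder dx P f k\<bar>
    \<le> dx * (B1 + B2) * ((dxp dx f (k+1))^2 + (dxp dx f k)^2 + (dxp dx f (k-1))^2 + (f (k+1))^2)"
proof -
  define g where "g = dxp dx f"
  define A1 where "A1 = P (k+2) - P (k+1)"
  define A3 where "A3 = P k - P (k-1)"
  define A2 where "A2 = (A1 - A3) / dx"
  have a1: "\<bar>A1\<bar> \<le> B1 * dx" using h1[rule_format, of "k+1"] by (simp add: A1_def add.assoc)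
  have a3: "\<bar>A3\<bar> \<le> B1 * dx" using h1[rule_format, of "k-1"] by (simp add: A3_def)
  have "A1 - A3 = (P (k+1+1) - 2 * P (k+1) + P (k+1-1)) + (P (k+1) - 2 * P k + P (k-1))"
    by (simp add: A1_def A3_def add.assoc)
  then have "\<bar>A1 - A3\<bar> \<le> 2 * B2 * dx^2" using h2[rule_format, of "k+1"] h2[rule_format, of k] by linarith
  then have a2: "\<bar>A2\<bar> \<le> 2 * B2 * dx"
    using dx by (simp add: A2_def abs_divide power2_eq_square divide_le_eq mult.assoc)
  text \<open>\<open>f (k+1) - f (k-1) = dx * (g k + g (k-1))\<close> turns the quotient into bounded coefficients.\<close>
  have "leibniz_remainder dx P f k = (A1 * g (k+1) * g k) / 2 + (A2 * f (k+1) * g k) / 2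
      + (A3 * g k * g k) / 2 + (A3 * g (k-1) * g k) / 2"
    using dx by (simp add: leibniz_remainder_def A1_def A2_def A3_def g_def dxp_def field_simps)
  then have "\<bar>leibniz_remainder dx P f k\<bar> \<le> \<bar>A1 * g (k+1) * g k\<bar> / 2 + \<bar>A2 * f (k+1) * g k\<bar> / 2
      + \<bar>A3 * g k * g k\<bar> / 2 + \<bar>A3 * g (k-1) * g k\<bar> / 2"
    by linarith
  also have "\<dots> \<le> B1 * dx * (((g (k+1))^2 + (g k)^2) / 2) / 2 + 2 * B2 * dx * (((f (k+1))^2 + (g k)^2) / 2) / 2
      + B1 * dx * (((g k)^2 + (g k)^2) / 2) / 2 + B1 * dx * (((g (k-1))^2 + (g k)^2) / 2) / 2"
    using abs_mult_mult_le_half_sum_squares[OF a1, of "g (k+1)" "g k"]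
      abs_mult_mult_le_half_sum_squares[OF a2, of "f (k+1)" "g k"]
      abs_mult_mult_le_half_sum_squares[OF a3, of "g k" "g k"]
      abs_mult_mult_le_half_sum_squares[OF a3, of "g (k-1)" "g k"]
    by linarith
  also have "\<dots> \<le> dx * (B1 + B2) * ((g (k+1))^2 + (g k)^2 + (g (k-1))^2 + (f (k+1))^2)"
    using B1 B2 dx by (simp add: field_simps)
  finally show ?thesis unfolding g_def .
qed

lemma abs_grid_inner_dx2_dx1_mult_le:
  assumes pP: "periodic_grid K P" and pf: "periodic_grid K f" and dx: "dx > 0"
    and B1: "B1 \<ge> 0" and B2: "B2 \<ge> 0"
    and h1: "\<forall>k. \<bar>P (k+1) - P k\<bar> \<le> B1 * dx"
    and h2: "\<forall>k. \<bar>P (k+1) - 2 * P k + P (k-1)\<bar> \<le> B2 * dx^2"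
  shows "\<bar>grid_inner K dx (dx2 dx f) (dx1 dx (\<lambda>j. P j * f j))\<bar>
    \<le> (B1 + B2) * (3 * (gnorm K dx (dxp dx f))^2 + (gnorm K dx f)^2)"
proof -
  define g where "g = dxp dx f"
  have pg: "periodic_grid K g" unfolding g_def by (rule periodic_grid_dxp[OF pf])
  have "\<bar>grid_inner K dx (dx2 dx f) (dx1 dx (\<lambda>j. P j * f j))\<bar> = \<bar>\<Sum>k=1..int K. leibniz_remainder dx P f k\<bar>"
    by (simp add: grid_inner_dx2_dx1_mult_eq[OF pP pf dx])
  also have "\<dots> \<le> (\<Sum>k=1..int K. dx * (B1 + B2) * ((g (k+1))^2 + (g k)^2 + (g (k-1))^2 + (f (k+1))^2))"
    unfolding g_def by (rule abs_sum_le_sum[OF abs_leibniz_remainder_le[OF dx B1 B2 h1 h2]])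
  also have "\<dots> = dx * (B1 + B2) * ((\<Sum>k=1..int K. (g (k+1))^2) + (\<Sum>k=1..int K. (g k)^2)
      + (\<Sum>k=1..int K. (g (k-1))^2) + (\<Sum>k=1..int K. (f (k+1))^2))"
    by (simp only: sum_distrib_left[symmetric] sum.distrib)
  also have "\<dots> = (B1 + B2) * (3 * (gnorm K dx g)^2 + (gnorm K dx f)^2)"
    using dx unfolding periodic_sum_power2_shift[OF pg] periodic_sum_power2_shift[OF pf]
    by (simp add: gnorm_power2 algebra_simps)
  finally show ?thesis unfolding g_def .
qed

lemma abs_dx2_mult_dx1_small_le:
  assumes dx: "dx > 0" and dxL: "dx \<le> L" and c: "c \<ge> 0"
    and hz: "\<forall>k. \<bar>z k\<bar> \<le> c * dx^3 * (\<bar>e k\<bar> + \<bar>e' k\<bar>)"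
  shows "dx * \<bar>dx2 dx f k * dx1 dx z k\<bar> \<le> c * L * dx / 2 * ((dxp dx f k)^2 + (dxp dx f (k-1))^2
      + 2 * ((e (k+1))^2 + (e' (k+1))^2 + (e (k-1))^2 + (e' (k-1))^2))"
proof -
  define G where "G = \<bar>dxp dx f k\<bar> + \<bar>dxp dx f (k-1)\<bar>"
  define X where "X = (\<bar>e (k+1)\<bar> + \<bar>e' (k+1)\<bar>) + (\<bar>e (k-1)\<bar> + \<bar>e' (k-1)\<bar>)"
  have G0: "G \<ge> 0" "X \<ge> 0" by (simp_all add: G_def X_def)
  have "dx * \<bar>dx2 dx f k\<bar> \<le> G"
  proof -
    have "dx * dx2 dx f k = dxp dx f k - dxp dx f (k-1)"
      using dx by (simp add: dx2_def dxp_def field_simps power2_eq_square)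
    then show ?thesis unfolding G_def using dx by (simp add: abs_mult[symmetric])
  qed
  moreover have "\<bar>dx1 dx z k\<bar> \<le> c * dx^2 * X / 2"
  proof -
    have "\<bar>z (k+1) - z (k-1)\<bar> \<le> c * dx^3 * X"
      using hz[rule_format, of "k+1"] hz[rule_format, of "k-1"] unfolding X_def distrib_left by linarith
    then show ?thesis using dx by (simp add: dx1_def abs_divide divide_le_eq power2_eq_square power3_eq_cube mult_ac)
  qed
  ultimately have "(dx * \<bar>dx2 dx f k\<bar>) * \<bar>dx1 dx z k\<bar> \<le> G * (c * dx^2 * X / 2)"
    using G0 by (intro mult_mono) auto
  then have "dx * \<bar>dx2 dx f k * dx1 dx z k\<bar> \<le> G * (c * dx^2 * X / 2)"
    by (simp add: abs_mult mult.assoc)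
  also have "\<dots> \<le> c * L * dx / 2 * (G * X)"
  proof -
    have "dx^2 \<le> L * dx" using dx dxL by (simp add: power2_eq_square mult_right_mono)
    then have "c * dx^2 * (G * X) / 2 \<le> c * (L * dx) * (G * X) / 2"
      using c G0 by (intro divide_right_mono mult_right_mono mult_left_mono) auto
    then show ?thesis by (simp add: algebra_simps)
  qed
  also have "G * X \<le> (dxp dx f k)^2 + (dxp dx f (k-1))^2
      + 2 * ((e (k+1))^2 + (e' (k+1))^2 + (e (k-1))^2 + (e' (k-1))^2)"
  proof -
    have "G * X \<le> (G^2 + X^2) / 2" using abs_mult_le_half_sum_squares[of G X] G0 by simp
    moreover have "G^2 \<le> 2 * ((dxp dx f k)^2 + (dxp dx f (k-1))^2)"
      using power2_sum_le_twice[of "\<bar>dxp dx f k\<bar>" "\<bar>dxp dx f (k-1)\<bar>"] by (simp add: G_def)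
    moreover have "X^2 \<le> 2 * ((\<bar>e (k+1)\<bar> + \<bar>e' (k+1)\<bar>)^2 + (\<bar>e (k-1)\<bar> + \<bar>e' (k-1)\<bar>)^2)"
      unfolding X_def by (rule power2_sum_le_twice)
    moreover have "(\<bar>e j\<bar> + \<bar>e' j\<bar>)^2 \<le> 2 * ((e j)^2 + (e' j)^2)" for j
      using power2_sum_le_twice[of "\<bar>e j\<bar>" "\<bar>e' j\<bar>"] by simp
    note this[of "k+1"] this[of "k-1"]
    ultimately show ?thesis unfolding distrib_left add_divide_distrib by linarith
  qed
  finally show ?thesis using c dx dxL by (simp add: mult_left_mono)
qed

lemma abs_grid_inner_dx2_dx1_small_le:
  assumes pf: "periodic_grid K f" and pe: "periodic_grid K e" and pe': "periodic_grid K e'"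
    and dx: "dx > 0" and dxL: "dx \<le> L" and c: "c \<ge> 0"
    and hz: "\<forall>k. \<bar>z k\<bar> \<le> c * dx^3 * (\<bar>e k\<bar> + \<bar>e' k\<bar>)"
  shows "\<bar>grid_inner K dx (dx2 dx f) (dx1 dx z)\<bar>
    \<le> c * L * ((gnorm K dx (dxp dx f))^2 + 2 * (gnorm K dx e)^2 + 2 * (gnorm K dx e')^2)"
proof -
  define g where "g = dxp dx f"
  have pg: "periodic_grid K g" unfolding g_def by (rule periodic_grid_dxp[OF pf])
  have "\<bar>grid_inner K dx (dx2 dx f) (dx1 dx z)\<bar> = dx * \<bar>\<Sum>k=1..int K. dx2 dx f k * dx1 dx z k\<bar>"
    using dx by (simp add: grid_inner_def abs_mult)
  also have "\<dots> \<le> (\<Sum>k=1..int K. dx * \<bar>dx2 dx f k * dx1 dx z k\<bar>)"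
    using dx sum_abs by (simp add: sum_distrib_left[symmetric] mult_left_mono)
  also have "\<dots> \<le> (\<Sum>k=1..int K. c * L * dx / 2 * ((g k)^2 + (g (k-1))^2
      + 2 * ((e (k+1))^2 + (e' (k+1))^2 + (e (k-1))^2 + (e' (k-1))^2)))"
    unfolding g_def by (rule sum_mono, rule abs_dx2_mult_dx1_small_le[OF dx dxL c hz])
  also have "\<dots> = c * L * dx / 2 * ((\<Sum>k=1..int K. (g k)^2) + (\<Sum>k=1..int K. (g (k-1))^2)
      + 2 * ((\<Sum>k=1..int K. (e (k+1))^2) + (\<Sum>k=1..int K. (e' (k+1))^2)
        + (\<Sum>k=1..int K. (e (k-1))^2) + (\<Sum>k=1..int K. (e' (k-1))^2)))"
    by (simp only: sum_distrib_left[symmetric] sum.distrib)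
  also have "\<dots> = c * L * ((gnorm K dx g)^2 + 2 * (gnorm K dx e)^2 + 2 * (gnorm K dx e')^2)"
    using dx unfolding periodic_sum_power2_shift[OF pg] periodic_sum_power2_shift[OF pe]
      periodic_sum_power2_shift[OF pe'] by (simp add: gnorm_power2 algebra_simps)
  finally show ?thesis unfolding g_def .
qed

lemma dxp_mid: "dxp dx (\<lambda>k. (a k + b k) / 2) = (\<lambda>k. (dxp dx a k + dxp dx b k) / 2)"
  by (simp add: fun_eq_iff dxp_def add_divide_distrib diff_divide_distrib)

lemma gnorm_mid_power2_le:
  assumes "dx \<ge> 0"
  shows "(gnorm K dx (\<lambda>k. (a k + b k) / 2))^2 \<le> ((gnorm K dx a)^2 + (gnorm K dx b)^2) / 2"
proof -
  have "((a k + b k) / 2)^2 \<le> ((a k)^2 + (b k)^2) / 2" for k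
    using power2_sum_le_twice[of "a k" "b k"] by (simp add: power_divide)
  then have "(\<Sum>k=1..int K. ((a k + b k) / 2)^2) \<le> (\<Sum>k=1..int K. ((a k)^2 + (b k)^2) / 2)"
    by (rule sum_mono)
  also have "\<dots> = ((\<Sum>k=1..int K. (a k)^2) + (\<Sum>k=1..int K. (b k)^2)) / 2"
    by (simp add: sum.distrib sum_divide_distrib[symmetric])
  finally have "dx * (\<Sum>k=1..int K. ((a k + b k) / 2)^2)
      \<le> dx * (((\<Sum>k=1..int K. (a k)^2) + (\<Sum>k=1..int K. (b k)^2)) / 2)"
    using assms by (rule mult_left_mono)
  then show ?thesis using assms by (simp add: gnorm_power2 add_divide_distrib distrib_left)
qed

lemma power2_le_h1norm_power2:
  "(gnorm K dx v)^2 \<le> (h1norm K dx v)^2" "(gnorm K dx (dxp dx v))^2 \<le> (h1norm K dx v)^2"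
  by (simp_all add: h1norm_power2)

lemma gnorm_mid_le_h1norm:
  assumes dx: "dx \<ge> 0"
  shows "(gnorm K dx (\<lambda>k. (e k + e' k) / 2))^2 \<le> (h1norm K dx e)^2 + (h1norm K dx e')^2"
    and "(gnorm K dx (dxp dx (\<lambda>k. (e k + e' k) / 2)))^2 \<le> (h1norm K dx e)^2 + (h1norm K dx e')^2"
proof -
  note h1 = power2_le_h1norm_power2[of K dx e] power2_le_h1norm_power2[of K dx e']
    and nonneg = zero_le_power2[of "h1norm K dx e"] zero_le_power2[of "h1norm K dx e'"]
  show "(gnorm K dx (\<lambda>k. (e k + e' k) / 2))^2 \<le> (h1norm K dx e)^2 + (h1norm K dx e')^2"
    using gnorm_mid_power2_le[OF dx, of K e e'] h1 nonneg unfolding add_divide_distrib[of _ _ 2] by linarith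
  show "(gnorm K dx (dxp dx (\<lambda>k. (e k + e' k) / 2)))^2 \<le> (h1norm K dx e)^2 + (h1norm K dx e')^2"
    using gnorm_mid_power2_le[OF dx, of K "dxp dx e" "dxp dx e'", folded dxp_mid] h1 nonneg
    unfolding add_divide_distrib[of _ _ 2] by linarith
qed

lemma minus_two_grid_inner_le:
  assumes "dx \<ge> 0"
  shows "- 2 * grid_inner K dx a b \<le> (gnorm K dx a)^2 + (gnorm K dx b)^2"
proof -
  have "- 2 * (a k * b k) \<le> (a k)^2 + (b k)^2" for k
    using sum_squares_bound[of "- a k" "b k"] by simp
  then have "(\<Sum>k=1..int K. - 2 * (a k * b k)) \<le> (\<Sum>k=1..int K. (a k)^2 + (b k)^2)"
    by (rule sum_mono)
  then have "dx * (\<Sum>k=1..int K. - 2 * (a k * b k)) \<le> dx * (\<Sum>k=1..int K. (a k)^2 + (b k)^2)"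
    using assms by (rule mult_left_mono)
  moreover have "(\<Sum>k=1..int K. - 2 * (a k * b k)) = - 2 * (\<Sum>k=1..int K. a k * b k)"
    by (simp add: sum_distrib_left)
  ultimately show ?thesis
    by (simp add: grid_inner_def gnorm_power2[OF assms] sum.distrib distrib_left)
qed

lemma abs_trinomial_lin_le:
  assumes "\<bar>V k\<bar> \<le> r" and "\<bar>W k\<bar> \<le> r"
  shows "\<bar>trinomial_lin V W e e' k\<bar> \<le> 3 * r * (\<bar>e k\<bar> + \<bar>e' k\<bar>)"
proof -
  have "\<bar>trinomial_lin V W e e' k\<bar> \<le> 2 * (\<bar>W k\<bar> * \<bar>e' k\<bar>) + \<bar>W k\<bar> * \<bar>e k\<bar> + \<bar>V k\<bar> * \<bar>e' k\<bar> + 2 * (\<bar>V k\<bar> * \<bar>e k\<bar>)"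
    unfolding trinomial_lin_def by (simp add: abs_mult[symmetric] mult.assoc)
  moreover have "\<bar>W k\<bar> * \<bar>e' k\<bar> \<le> r * \<bar>e' k\<bar>" "\<bar>W k\<bar> * \<bar>e k\<bar> \<le> r * \<bar>e k\<bar>"
    "\<bar>V k\<bar> * \<bar>e' k\<bar> \<le> r * \<bar>e' k\<bar>" "\<bar>V k\<bar> * \<bar>e k\<bar> \<le> r * \<bar>e k\<bar>"
    using assms by (simp_all add: mult_right_mono)
  ultimately show ?thesis unfolding distrib_left by linarith
qed

lemma abs_dx1_trinomial_le:
  assumes dx: "dx > 0" and R: "R \<ge> 0" and he: "\<forall>k. \<bar>e k\<bar> \<le> R" and he': "\<forall>k. \<bar>e' k\<bar> \<le> R"
  shows "\<bar>dx1 dx (trinomial e e') k\<bar>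
    \<le> 3 * R / 2 * (\<bar>dxp dx e' k\<bar> + \<bar>dxp dx e' (k-1)\<bar> + \<bar>dxp dx e k\<bar> + \<bar>dxp dx e (k-1)\<bar>)"
proof -
  define a where "a = e' (k+1)" define a' where "a' = e' (k-1)"
  define b where "b = e (k+1)" define b' where "b' = e (k-1)"
  have diff: "trinomial e e' (k+1) - trinomial e e' (k-1) = (a - a') * (a + a' + b) + (b - b') * (a' + b + b')"
    by (simp add: trinomial_def a_def a'_def b_def b'_def power2_eq_square algebra_simps)
  have aa: "a - a' = dx * (dxp dx e' k + dxp dx e' (k-1))" and bb: "b - b' = dx * (dxp dx e k + dxp dx e (k-1))"
    using dx by (simp_all add: a_def a'_def b_def b'_def dxp_def field_simps)
  have "\<bar>a + a' + b\<bar> \<le> 3 * R" "\<bar>a' + b + b'\<bar> \<le> 3 * R"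
    using he'[rule_format, of "k+1"] he'[rule_format, of "k-1"] he[rule_format, of "k+1"] he[rule_format, of "k-1"]
    unfolding a_def a'_def b_def b'_def by linarith+
  then have "\<bar>a - a'\<bar> * \<bar>a + a' + b\<bar> + \<bar>b - b'\<bar> * \<bar>a' + b + b'\<bar> \<le> \<bar>a - a'\<bar> * (3 * R) + \<bar>b - b'\<bar> * (3 * R)"
    by (intro add_mono mult_left_mono) auto
  then have "\<bar>trinomial e e' (k+1) - trinomial e e' (k-1)\<bar> \<le> \<bar>a - a'\<bar> * (3 * R) + \<bar>b - b'\<bar> * (3 * R)"
    unfolding diff using abs_triangle_ineq[of "(a - a') * (a + a' + b)" "(b - b') * (a' + b + b')"]
    by (simp only: abs_mult)
  also have "\<dots> \<le> dx * (\<bar>dxp dx e' k\<bar> + \<bar>dxp dx e' (k-1)\<bar>) * (3 * R) + dx * (\<bar>dxp dx e k\<bar> + \<bar>dxp dx e (k-1)\<bar>) * (3 * R)"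
    unfolding aa bb using dx R
    by (intro add_mono mult_right_mono) (auto simp: abs_mult intro!: mult_left_mono)
  finally show ?thesis
    using dx by (simp add: dx1_def abs_divide divide_le_eq field_simps)
qed

lemma sum2_mult_sum4_le:
  "((x1::real) + x2) * (y1 + y2 + y3 + y4) \<le> 2 * (x1^2 + x2^2) + (y1^2 + y2^2 + y3^2 + y4^2)"
proof -
  define X where "X = x1 + x2"
  define Y where "Y = y1 + y2 + y3 + y4"
  have "0 \<le> (X - Y/2)^2" by simp
  then have "X * Y \<le> X^2 + Y^2/4" by (simp add: power2_eq_square algebra_simps)
  moreover have "X^2 \<le> 2 * (x1^2 + x2^2)" unfolding X_def by (rule power2_sum_le_twice)
  moreover have "Y^2 \<le> 2 * ((y1 + y2)^2 + (y3 + y4)^2)"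
    unfolding Y_def using power2_sum_le_twice[of "y1 + y2" "y3 + y4"] by (simp add: add.assoc)
  moreover have "(y1 + y2)^2 \<le> 2 * (y1^2 + y2^2)" "(y3 + y4)^2 \<le> 2 * (y3^2 + y4^2)"
    by (rule power2_sum_le_twice)+
  ultimately show ?thesis unfolding X_def[symmetric] Y_def[symmetric] distrib_left add_divide_distrib by linarith
qed

lemma abs_grid_inner_trinomial_lin_dx1_le:
  assumes pe: "periodic_grid K e" and pe': "periodic_grid K e'" and dx: "dx > 0"
    and r: "r \<ge> 0" and R: "R \<ge> 0"
    and hV: "\<forall>k. \<bar>V k\<bar> \<le> r" and hW: "\<forall>k. \<bar>W k\<bar> \<le> r"
    and he: "\<forall>k. \<bar>e k\<bar> \<le> R" and he': "\<forall>k. \<bar>e' k\<bar> \<le> R"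
  shows "\<bar>grid_inner K dx (trinomial_lin V W e e') (dx1 dx (trinomial e e'))\<bar>
    \<le> 9 * r * R * ((h1norm K dx e)^2 + (h1norm K dx e')^2)"
proof -
  define g where "g = dxp dx e"
  define g' where "g' = dxp dx e'"
  have pg: "periodic_grid K g" unfolding g_def by (rule periodic_grid_dxp[OF pe])
  have pg': "periodic_grid K g'" unfolding g'_def by (rule periodic_grid_dxp[OF pe'])
  have pointwise: "\<bar>trinomial_lin V W e e' k * dx1 dx (trinomial e e') k\<bar>
      \<le> 9 * r * R / 2 * (2 * ((e k)^2 + (e' k)^2) + ((g' k)^2 + (g' (k-1))^2 + (g k)^2 + (g (k-1))^2))" for k
  proof -
    have "\<bar>trinomial_lin V W e e' k * dx1 dx (trinomial e e') k\<bar>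
        \<le> (3 * r * (\<bar>e k\<bar> + \<bar>e' k\<bar>)) * (3 * R / 2 * (\<bar>g' k\<bar> + \<bar>g' (k-1)\<bar> + \<bar>g k\<bar> + \<bar>g (k-1)\<bar>))"
      unfolding abs_mult g_def g'_def using abs_trinomial_lin_le[OF hV[rule_format] hW[rule_format]]
        abs_dx1_trinomial_le[OF dx R he he'] r
      by (intro mult_mono) auto
    also have "\<dots> = 9 * r * R / 2 * ((\<bar>e k\<bar> + \<bar>e' k\<bar>) * (\<bar>g' k\<bar> + \<bar>g' (k-1)\<bar> + \<bar>g k\<bar> + \<bar>g (k-1)\<bar>))"
      by (simp add: algebra_simps)
    also have "\<dots> \<le> 9 * r * R / 2 * (2 * ((e k)^2 + (e' k)^2) + ((g' k)^2 + (g' (k-1))^2 + (g k)^2 + (g (k-1))^2))"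
      using sum2_mult_sum4_le[of "\<bar>e k\<bar>" "\<bar>e' k\<bar>" "\<bar>g' k\<bar>" "\<bar>g' (k-1)\<bar>" "\<bar>g k\<bar>" "\<bar>g (k-1)\<bar>"] r R
      by (intro mult_left_mono) auto
    finally show ?thesis .
  qed
  have "\<bar>grid_inner K dx (trinomial_lin V W e e') (dx1 dx (trinomial e e'))\<bar>
      = dx * \<bar>\<Sum>k=1..int K. trinomial_lin V W e e' k * dx1 dx (trinomial e e') k\<bar>"
    using dx by (simp add: grid_inner_def abs_mult)
  also have "\<dots> \<le> dx * (\<Sum>k=1..int K. 9 * r * R / 2 * (2 * ((e k)^2 + (e' k)^2)
      + ((g' k)^2 + (g' (k-1))^2 + (g k)^2 + (g (k-1))^2)))"
    using dx by (intro mult_left_mono abs_sum_le_sum pointwise) auto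
  also have "\<dots> = dx * (9 * r * R / 2) * (2 * ((\<Sum>k=1..int K. (e k)^2) + (\<Sum>k=1..int K. (e' k)^2))
      + ((\<Sum>k=1..int K. (g' k)^2) + (\<Sum>k=1..int K. (g' (k-1))^2) + (\<Sum>k=1..int K. (g k)^2)
        + (\<Sum>k=1..int K. (g (k-1))^2)))"
    by (simp only: sum_distrib_left[symmetric] sum.distrib mult.assoc)
  also have "\<dots> = 9 * r * R * ((h1norm K dx e)^2 + (h1norm K dx e')^2)"
    using dx unfolding periodic_sum_power2_shift[OF pg] periodic_sum_power2_shift[OF pg']
    by (simp add: h1norm_power2 gnorm_power2 g_def g'_def algebra_simps)
  finally show ?thesis .
qed

lemma abs_grid_inner_trinomial_le:
  assumes dx: "dx > 0" and he: "\<forall>k. \<bar>e k\<bar> \<le> R" and he': "\<forall>k. \<bar>e' k\<bar> \<le> R"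
  shows "\<bar>grid_inner K dx \<tau> (trinomial e e')\<bar> \<le> (gnorm K dx \<tau>)^2 / 2 + 4 * R^2 * ((gnorm K dx e)^2 + (gnorm K dx e')^2)"
proof -
  have pointwise: "\<bar>\<tau> k * trinomial e e' k\<bar> \<le> (\<tau> k)^2 / 2 + 4 * R^2 * ((e k)^2 + (e' k)^2)" for k
  proof -
    have "\<bar>trinomial e e' k\<bar> \<le> \<bar>e' k\<bar> * \<bar>e' k\<bar> + \<bar>e' k\<bar> * \<bar>e k\<bar> + \<bar>e k\<bar> * \<bar>e k\<bar>"
      unfolding trinomial_def power2_eq_square abs_mult[symmetric] by (simp add: order_trans[OF abs_triangle_ineq])
    also have "\<dots> \<le> R * \<bar>e' k\<bar> + 2 * (R * \<bar>e k\<bar>)"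
      using mult_right_mono[OF he'[rule_format, of k] abs_ge_zero, of "e' k"]
        mult_right_mono[OF he'[rule_format, of k] abs_ge_zero, of "e k"]
        mult_right_mono[OF he[rule_format, of k] abs_ge_zero, of "e k"]
      by linarith
    finally have "(trinomial e e' k)^2 \<le> (R * \<bar>e' k\<bar> + 2 * (R * \<bar>e k\<bar>))^2"
      by (metis abs_ge_zero power2_abs power_mono)
    also have "\<dots> \<le> 2 * ((R * \<bar>e' k\<bar>)^2 + (2 * (R * \<bar>e k\<bar>))^2)" by (rule power2_sum_le_twice)
    also have "\<dots> \<le> 8 * R^2 * ((e k)^2 + (e' k)^2)"
      using zero_le_power2[of "R * e' k"] by (simp add: power_mult_distrib algebra_simps)
    finally have "(trinomial e e' k)^2 \<le> 8 * R^2 * ((e k)^2 + (e' k)^2)" .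
    moreover have "\<bar>\<tau> k * trinomial e e' k\<bar> \<le> ((\<tau> k)^2 + (trinomial e e' k)^2) / 2"
      using abs_mult_le_half_sum_squares by (simp add: abs_mult)
    ultimately show ?thesis unfolding distrib_left add_divide_distrib by linarith
  qed
  have "\<bar>grid_inner K dx \<tau> (trinomial e e')\<bar> = dx * \<bar>\<Sum>k=1..int K. \<tau> k * trinomial e e' k\<bar>"
    using dx by (simp add: grid_inner_def abs_mult)
  also have "\<dots> \<le> dx * (\<Sum>k=1..int K. (\<tau> k)^2 / 2 + 4 * R^2 * ((e k)^2 + (e' k)^2))"
    using dx by (intro mult_left_mono abs_sum_le_sum pointwise) auto
  also have "\<dots> = (gnorm K dx \<tau>)^2 / 2 + 4 * R^2 * ((gnorm K dx e)^2 + (gnorm K dx e')^2)"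
    using dx by (simp add: gnorm_power2 sum.distrib sum_distrib_left sum_divide_distrib algebra_simps)
  finally show ?thesis .
qed

lemma trinomial_lin_split:
  "trinomial_lin V W e e' k = 3 * ((W k + V k) * ((e k + e' k) / 2)) + (W k - V k) * (e' k - e k) / 2"
  by (simp add: trinomial_lin_def field_simps)

lemma abs_grid_inner_dx2_dx1_trinomial_lin_le:
  fixes V W e e' :: "int \<Rightarrow> real"
  defines "f \<equiv> \<lambda>k. (e k + e' k) / 2"
  assumes pV: "periodic_grid K V" and pW: "periodic_grid K W"
    and pe: "periodic_grid K e" and pe': "periodic_grid K e'"
    and dx: "dx > 0" and dxL: "dx \<le> L" and B1: "B1 \<ge> 0" and B2: "B2 \<ge> 0" and c: "c \<ge> 0"
    and hV1: "\<forall>k. \<bar>V (k+1) - V k\<bar> \<le> B1 * dx" and hW1: "\<forall>k. \<bar>W (k+1) - W k\<bar> \<le> B1 * dx"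
    and hV2: "\<forall>k. \<bar>V (k+1) - 2 * V k + V (k-1)\<bar> \<le> B2 * dx^2"
    and hW2: "\<forall>k. \<bar>W (k+1) - 2 * W k + W (k-1)\<bar> \<le> B2 * dx^2"
    and hWV: "\<forall>k. \<bar>W k - V k\<bar> \<le> c * dx^3"
  shows "\<bar>grid_inner K dx (dx2 dx f) (dx1 dx (trinomial_lin V W e e'))\<bar>
    \<le> (24 * (B1 + B2) + 3 * c * L) * ((h1norm K dx e)^2 + (h1norm K dx e')^2)"
proof -
  define P where "P = (\<lambda>k. W k + V k)"
  define z where "z = (\<lambda>k. (W k - V k) * (e' k - e k))"
  define H where "H = (h1norm K dx e)^2 + (h1norm K dx e')^2"
  have pP: "periodic_grid K P" using pV pW by (simp add: periodic_grid_def P_def)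
  have pf: "periodic_grid K f" unfolding f_def by (rule periodic_grid_mid[OF pe pe'])
  have "dx1 dx (trinomial_lin V W e e') k = 3 * dx1 dx (\<lambda>j. P j * f j) k + dx1 dx z k / 2" for k
    using dx by (simp add: dx1_def trinomial_lin_split P_def f_def z_def field_simps)
  then have split: "grid_inner K dx (dx2 dx f) (dx1 dx (trinomial_lin V W e e'))
      = 3 * grid_inner K dx (dx2 dx f) (dx1 dx (\<lambda>j. P j * f j)) + grid_inner K dx (dx2 dx f) (dx1 dx z) / 2"
    by (simp add: grid_inner_def algebra_simps sum.distrib sum_distrib_left sum_divide_distrib)
  have "\<bar>P (k + 1) - P k\<bar> \<le> 2 * B1 * dx" for k
    using hW1[rule_format, of k] hV1[rule_format, of k] unfolding P_def abs_le_iff by linarith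
  moreover have "\<bar>P (k + 1) - 2 * P k + P (k - 1)\<bar> \<le> 2 * B2 * dx^2" for k
    using hW2[rule_format, of k] hV2[rule_format, of k] unfolding P_def abs_le_iff mult.assoc distrib_left
    by linarith
  ultimately have smooth_part: "\<bar>grid_inner K dx (dx2 dx f) (dx1 dx (\<lambda>j. P j * f j))\<bar>
      \<le> (2 * B1 + 2 * B2) * (3 * (gnorm K dx (dxp dx f))^2 + (gnorm K dx f)^2)"
    using B1 B2 by (intro abs_grid_inner_dx2_dx1_mult_le[OF pP pf dx]) auto
  have "\<bar>z k\<bar> \<le> c * dx^3 * (\<bar>e k\<bar> + \<bar>e' k\<bar>)" for k
    unfolding z_def abs_mult using hWV abs_triangle_ineq4 by (intro mult_mono) auto
  then have small_part: "\<bar>grid_inner K dx (dx2 dx f) (dx1 dx z)\<bar>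
      \<le> c * L * ((gnorm K dx (dxp dx f))^2 + 2 * (gnorm K dx e)^2 + 2 * (gnorm K dx e')^2)"
    by (intro abs_grid_inner_dx2_dx1_small_le[OF pf pe pe' dx dxL c]) simp
  have dx0: "dx \<ge> 0" using dx by simp
  have norms: "(gnorm K dx f)^2 \<le> H" "(gnorm K dx (dxp dx f))^2 \<le> H"
    "(gnorm K dx e)^2 \<le> H" "(gnorm K dx e')^2 \<le> H"
    using gnorm_mid_le_h1norm[OF dx0, of K e e', folded f_def] power2_le_h1norm_power2(1)[of K dx e]
      power2_le_h1norm_power2(1)[of K dx e'] zero_le_power2[of "h1norm K dx e"] zero_le_power2[of "h1norm K dx e'"]
    unfolding H_def by linarith+
  have "(2 * B1 + 2 * B2) * (3 * (gnorm K dx (dxp dx f))^2 + (gnorm K dx f)^2) \<le> (2 * B1 + 2 * B2) * (4 * H)"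
    using norms B1 B2 by (intro mult_left_mono) auto
  moreover have "c * L * ((gnorm K dx (dxp dx f))^2 + 2 * (gnorm K dx e)^2 + 2 * (gnorm K dx e')^2) \<le> c * L * (5 * H)"
    using norms c dx dxL by (intro mult_left_mono) auto
  moreover have "0 \<le> c * L * H" using c dx dxL by (simp add: H_def)
  ultimately show ?thesis
    unfolding split H_def[symmetric] using smooth_part small_part by (simp add: algebra_simps)
qed

section \<open>The one-step energy estimate\<close>

definition energy_constant :: "real \<Rightarrow> real \<Rightarrow> real \<Rightarrow> real \<Rightarrow> real \<Rightarrow> real \<Rightarrow> real \<Rightarrow> real \<Rightarrow> real" where
  "energy_constant \<alpha> \<beta> r R B1 B2 c L = \<bar>\<alpha>\<bar> / 3 * (24 * (B1 + B2) + 3 * c * L)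
     + \<alpha>^2 / (2 * \<bar>\<beta>\<bar>) * r * R + 4 * \<bar>\<alpha>\<bar> / (3 * \<bar>\<beta>\<bar>) * R^2 + 1"

lemma energy_constant_ge_1:
  assumes "r \<ge> 0" "R \<ge> 0" "B1 \<ge> 0" "B2 \<ge> 0" "c \<ge> 0" "L \<ge> 0"
  shows "energy_constant \<alpha> \<beta> r R B1 B2 c L \<ge> 1"
proof -
  have "0 \<le> \<bar>\<alpha>\<bar> / 3 * (24 * (B1 + B2) + 3 * c * L)" "0 \<le> \<alpha>^2 / (2 * \<bar>\<beta>\<bar>) * r * R"
    "0 \<le> 4 * \<bar>\<alpha>\<bar> / (3 * \<bar>\<beta>\<bar>) * R^2"
    using assms by (intro mult_nonneg_nonneg add_nonneg_nonneg; simp)+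
  then show ?thesis unfolding energy_constant_def by linarith
qed

lemma scheme_error_energy_identity:
  fixes v w V W :: "int \<Rightarrow> real" and \<alpha> \<beta> dx dt :: real
  defines "e \<equiv> \<lambda>k. v k - V k" and "e' \<equiv> \<lambda>k. w k - W k"
  assumes dx: "dx > 0" and dt: "dt > 0" and \<beta>: "\<beta> \<noteq> 0"
    and pv: "periodic_grid K v" and pw: "periodic_grid K w"
    and pV: "periodic_grid K V" and pW: "periodic_grid K W"
    and sch: "scheme_step \<alpha> \<beta> dx dt v w"
  shows "((gnorm K dx (dxp dx e'))^2 - (gnorm K dx (dxp dx e))^2) / dt
      + (\<alpha> / (3*\<beta>) * (\<Sum>k=1..int K. (e' k)^3 * dx) - \<alpha> / (3*\<beta>) * (\<Sum>k=1..int K. (e k)^3 * dx)) / dt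
    = \<alpha> / 3 * grid_inner K dx (dx2 dx (\<lambda>k. (e k + e' k) / 2)) (dx1 dx (trinomial_lin V W e e'))
      + \<alpha>^2 / (18*\<beta>) * grid_inner K dx (trinomial_lin V W e e') (dx1 dx (trinomial e e'))
      - \<alpha> / (3*\<beta>) * grid_inner K dx (scheme_residual \<alpha> \<beta> dx dt V W) (trinomial e e')
      - 2 * grid_inner K dx (dxp dx (scheme_residual \<alpha> \<beta> dx dt V W)) (dxp dx (\<lambda>k. (e k + e' k) / 2))"
proof (rule discrete_energy_identity[OF dx dt \<beta>])
  show "periodic_grid K e" "periodic_grid K e'" "periodic_grid K (trinomial_lin V W e e')"
    using pv pV pw pW by (simp_all add: periodic_grid_def e_def e'_def trinomial_lin_def)
  show "periodic_grid K (scheme_residual \<alpha> \<beta> dx dt V W)" by (rule periodic_grid_scheme_residual[OF pV pW])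
qed (use scheme_error_equation[OF sch] in \<open>simp add: e_def e'_def\<close>)

lemma one_step_energy_estimate:
  fixes v w V W :: "int \<Rightarrow> real" and \<alpha> \<beta> dx dt :: real
  defines "e \<equiv> \<lambda>k. v k - V k" and "e' \<equiv> \<lambda>k. w k - W k" and "\<tau> \<equiv> scheme_residual \<alpha> \<beta> dx dt V W"
  assumes dx: "dx > 0" and dxL: "dx \<le> L" and dt: "dt > 0" and \<beta>: "\<beta> \<noteq> 0"
    and pv: "periodic_grid K v" and pw: "periodic_grid K w"
    and pV: "periodic_grid K V" and pW: "periodic_grid K W"
    and sch: "scheme_step \<alpha> \<beta> dx dt v w"
    and r: "r \<ge> 0" and R: "R \<ge> 0" and B1: "B1 \<ge> 0" and B2: "B2 \<ge> 0" and c: "c \<ge> 0"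
    and hV: "\<forall>k. \<bar>V k\<bar> \<le> r" and hW: "\<forall>k. \<bar>W k\<bar> \<le> r"
    and he: "\<forall>k. \<bar>e k\<bar> \<le> R" and he': "\<forall>k. \<bar>e' k\<bar> \<le> R"
    and hV1: "\<forall>k. \<bar>V (k+1) - V k\<bar> \<le> B1 * dx" and hW1: "\<forall>k. \<bar>W (k+1) - W k\<bar> \<le> B1 * dx"
    and hV2: "\<forall>k. \<bar>V (k+1) - 2 * V k + V (k-1)\<bar> \<le> B2 * dx^2"
    and hW2: "\<forall>k. \<bar>W (k+1) - 2 * W k + W (k-1)\<bar> \<le> B2 * dx^2"
    and hWV: "\<forall>k. \<bar>W k - V k\<bar> \<le> c * dx^3"
  shows "((gnorm K dx (dxp dx e'))^2 - (gnorm K dx (dxp dx e))^2) / dt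
    \<le> - ((\<alpha> / (3*\<beta>) * (\<Sum>k=1..int K. (e' k)^3 * dx) - \<alpha> / (3*\<beta>) * (\<Sum>k=1..int K. (e k)^3 * dx)) / dt)
      + energy_constant \<alpha> \<beta> r R B1 B2 c L * ((h1norm K dx e)^2 + (h1norm K dx e')^2)
      + (gnorm K dx (dxp dx \<tau>))^2 + \<bar>\<alpha>\<bar> / (6 * \<bar>\<beta>\<bar>) * (gnorm K dx \<tau>)^2"
proof -
  define f where "f = (\<lambda>k. (e k + e' k) / 2)"
  define Lf where "Lf = trinomial_lin V W e e'"
  define S where "S = trinomial e e'"
  define H where "H = (h1norm K dx e)^2 + (h1norm K dx e')^2"
  have dx0: "dx \<ge> 0" using dx by simp
  have pe: "periodic_grid K e" using pv pV by (simp add: periodic_grid_def e_def)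
  have pe': "periodic_grid K e'" using pw pW by (simp add: periodic_grid_def e'_def)
  have identity: "((gnorm K dx (dxp dx e'))^2 - (gnorm K dx (dxp dx e))^2) / dt
      + (\<alpha> / (3*\<beta>) * (\<Sum>k=1..int K. (e' k)^3 * dx) - \<alpha> / (3*\<beta>) * (\<Sum>k=1..int K. (e k)^3 * dx)) / dt
    = \<alpha> / 3 * grid_inner K dx (dx2 dx f) (dx1 dx Lf) + \<alpha>^2 / (18*\<beta>) * grid_inner K dx Lf (dx1 dx S)
      - \<alpha> / (3*\<beta>) * grid_inner K dx \<tau> S - 2 * grid_inner K dx (dxp dx \<tau>) (dxp dx f)"
    unfolding f_def Lf_def S_def \<tau>_def e_def e'_def by (rule scheme_error_energy_identity[OF dx dt \<beta> pv pw pV pW sch])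
  have "\<alpha> / 3 * grid_inner K dx (dx2 dx f) (dx1 dx Lf) \<le> \<bar>\<alpha> / 3\<bar> * ((24 * (B1 + B2) + 3 * c * L) * H)"
    unfolding f_def Lf_def H_def
    by (rule mult_le_abs_mult_bound, rule abs_grid_inner_dx2_dx1_trinomial_lin_le)
      (use pV pW pe pe' dx dxL B1 B2 c hV1 hW1 hV2 hW2 hWV in auto)
  then have linear: "\<alpha> / 3 * grid_inner K dx (dx2 dx f) (dx1 dx Lf) \<le> \<bar>\<alpha>\<bar> / 3 * (24 * (B1 + B2) + 3 * c * L) * H"
    by (simp add: abs_divide)
  have "\<alpha>^2 / (18*\<beta>) * grid_inner K dx Lf (dx1 dx S) \<le> \<bar>\<alpha>^2 / (18*\<beta>)\<bar> * (9 * r * R * H)"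
    unfolding Lf_def S_def H_def
    by (rule mult_le_abs_mult_bound, rule abs_grid_inner_trinomial_lin_dx1_le[OF pe pe' dx r R hV hW he he'])
  then have cubic: "\<alpha>^2 / (18*\<beta>) * grid_inner K dx Lf (dx1 dx S) \<le> \<alpha>^2 / (2 * \<bar>\<beta>\<bar>) * r * R * H"
    by (simp add: abs_divide abs_mult mult_ac)
  have "4 * R^2 * ((gnorm K dx e)^2 + (gnorm K dx e')^2) \<le> 4 * R^2 * H"
    using power2_le_h1norm_power2(1)[of K dx e] power2_le_h1norm_power2(1)[of K dx e']
    unfolding H_def by (intro mult_left_mono) auto
  with abs_grid_inner_trinomial_le[OF dx he he', of K \<tau>]
  have "- \<alpha> / (3*\<beta>) * grid_inner K dx \<tau> S \<le> \<bar>- \<alpha> / (3*\<beta>)\<bar> * ((gnorm K dx \<tau>)^2 / 2 + 4 * R^2 * H)"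
    unfolding S_def by (intro mult_le_abs_mult_bound) linarith
  then have residual: "- \<alpha> / (3*\<beta>) * grid_inner K dx \<tau> S
      \<le> \<bar>\<alpha>\<bar> / (6 * \<bar>\<beta>\<bar>) * (gnorm K dx \<tau>)^2 + 4 * \<bar>\<alpha>\<bar> / (3 * \<bar>\<beta>\<bar>) * R^2 * H"
    by (simp add: abs_divide abs_mult algebra_simps)
  have residual_diff: "- 2 * grid_inner K dx (dxp dx \<tau>) (dxp dx f) \<le> (gnorm K dx (dxp dx \<tau>))^2 + H"
    using minus_two_grid_inner_le[OF dx0, of K "dxp dx \<tau>" "dxp dx f"] gnorm_mid_le_h1norm(2)[OF dx0, of K e e']
    unfolding H_def f_def by linarith
  show ?thesis
    using identity linear cubic residual residual_diff
    unfolding energy_constant_def H_def[symmetric] distrib_right by linarith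
qed

section \<open>Smoothness of the exact solution\<close>

lemma continuous_on_strip_bounded:
  fixes F :: "real \<Rightarrow> real \<Rightarrow> real"
  assumes "continuous_on ({0..T} \<times> UNIV) (\<lambda>(t, x). F t x)"
  obtains B where "B \<ge> 0" "\<And>t x. t \<in> {0..T} \<Longrightarrow> x \<in> {a..b} \<Longrightarrow> \<bar>F t x\<bar> \<le> B"
proof -
  have "continuous_on ({0..T} \<times> {a..b}) (\<lambda>(t, x). F t x)"
    by (rule continuous_on_subset[OF assms]) auto
  then have "compact ((\<lambda>(t, x). F t x) ` ({0..T} \<times> {a..b}))"
    by (intro compact_continuous_image compact_Times compact_Icc)
  then have "bounded ((\<lambda>(t, x). F t x) ` ({0..T} \<times> {a..b}))" by (rule compact_imp_bounded)
  then obtain B where B: "\<forall>y\<in>(\<lambda>(t, x). F t x) ` ({0..T} \<times> {a..b}). norm y \<le> B"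
    by (auto simp: bounded_iff)
  have "\<bar>F t x\<bar> \<le> max B 0" if "t \<in> {0..T}" "x \<in> {a..b}" for t x
    using B that by force
  then show ?thesis using that[of "max B 0"] by simp
qed

lemma periodic_add_int_multiple:
  assumes "\<forall>x. g (x + L) = g (x::real)"
  shows "g (z + real_of_int n * L) = g z"
proof (induction n rule: int_induct[where k = 0])
  case (step1 i)
  have "g (z + real_of_int (i + 1) * L) = g ((z + real_of_int i * L) + L)" by (simp add: algebra_simps)
  with assms step1 show ?case by simp
next
  case (step2 i)
  have "g (z + real_of_int i * L) = g ((z + real_of_int (i - 1) * L) + L)" by (simp add: algebra_simps)
  with assms step2 show ?case by simp
qed simp

lemma periodic_reduce_to_period:
  assumes "\<forall>t x. u t (x + L) = u t (x::real)" and "L > 0"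
  obtains x0 where "x0 \<in> {0..L}" "\<And>t c. u t (x + c) = u t (x0 + c)"
proof -
  define n where "n = \<lfloor>x / L\<rfloor>"
  define x0 where "x0 = x - real_of_int n * L"
  have "real_of_int n \<le> x / L" "x / L < real_of_int n + 1" unfolding n_def by linarith+
  then have "real_of_int n * L \<le> x" "x < (real_of_int n + 1) * L" using assms(2) by (simp_all add: field_simps)
  then have "x0 \<in> {0..L}" unfolding x0_def by (auto simp: algebra_simps)
  moreover have "u t (x + c) = u t (x0 + c)" for t c
    using periodic_add_int_multiple[of "u t" L "x0 + c" n] assms(1) by (simp add: x0_def algebra_simps)
  ultimately show ?thesis using that by blast
qed

lemma lipschitz_of_derivative_bound:
  fixes g g' :: "real \<Rightarrow> real"
  assumes "convex S" and "\<And>y. y \<in> S \<Longrightarrow> (g has_real_derivative g' y) (at y within S)"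
    and "\<And>y. y \<in> S \<Longrightarrow> \<bar>g' y\<bar> \<le> B" and "a \<in> S" and "b \<in> S"
  shows "\<bar>g b - g a\<bar> \<le> B * \<bar>b - a\<bar>"
  using field_differentiable_bound[of S g g' B b a] assms by simp

lemma second_difference_le:
  fixes g g' :: "real \<Rightarrow> real"
  assumes h: "h > 0"
    and deriv: "\<And>y. y \<in> {x-h..x+h} \<Longrightarrow> (g has_real_derivative g' y) (at y)"
    and lip: "\<And>s t. s \<in> {x-h..x+h} \<Longrightarrow> t \<in> {x-h..x+h} \<Longrightarrow> \<bar>g' s - g' t\<bar> \<le> B * \<bar>s - t\<bar>"
  shows "\<bar>g (x+h) - 2 * g x + g (x-h)\<bar> \<le> B * h^2"
proof -
  define \<phi> where "\<phi> = (\<lambda>y. g (y + h) - g y)"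
  have "\<bar>\<phi> x - \<phi> (x - h)\<bar> \<le> (B * h) * \<bar>x - (x - h)\<bar>"
  proof (rule lipschitz_of_derivative_bound[where S = "{x-h..x}" and g' = "\<lambda>y. g' (y + h) - g' y"])
    show "(\<phi> has_real_derivative g' (y + h) - g' y) (at y within {x-h..x})" if "y \<in> {x-h..x}" for y
    proof -
      have "(g has_real_derivative g' (y + h)) (at (y + h))" using deriv that h by simp
      then have "((\<lambda>y. g (y + h)) has_real_derivative g' (y + h)) (at y)" by (rule DERIV_shift[THEN iffD1])
      moreover have "(g has_real_derivative g' y) (at y)" using deriv that h by simp
      ultimately show ?thesis unfolding \<phi>_def by (rule has_field_derivative_at_within[OF DERIV_diff])
    qed
    show "\<bar>g' (y + h) - g' y\<bar> \<le> B * h" if "y \<in> {x-h..x}" for y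
      using lip[of "y + h" y] that h by simp
  qed (use h in auto)
  then show ?thesis using h by (simp add: \<phi>_def power2_eq_square)
qed

lemma smooth_kdv_solution_bounds:
  assumes L: "L > 0" and sm: "smooth_kdv_solution \<alpha> \<beta> L T u"
  obtains Bt B1 B2 where "Bt \<ge> 0" "B1 \<ge> 0" "B2 \<ge> 0"
   "\<And>t x h. t \<in> {0..T} \<Longrightarrow> 0 < h \<Longrightarrow> h \<le> L \<Longrightarrow> \<bar>u t (x+h) - u t x\<bar> \<le> B1 * h"
   "\<And>t x h. t \<in> {0..T} \<Longrightarrow> 0 < h \<Longrightarrow> h \<le> L \<Longrightarrow> \<bar>u t (x+h) - 2 * u t x + u t (x-h)\<bar> \<le> B2 * h^2"
   "\<And>t t' x. t \<in> {0..T} \<Longrightarrow> t' \<in> {0..T} \<Longrightarrow> \<bar>u t' x - u t x\<bar> \<le> Bt * \<bar>t' - t\<bar>"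
proof -
  have per: "\<forall>t x. u t (x + L) = u t x" using sm by (simp add: smooth_kdv_solution_def)
  obtain ut ux uxx uxxx :: "real \<Rightarrow> real \<Rightarrow> real" where
    c1: "continuous_on ({0..T} \<times> UNIV) (\<lambda>(t, x). ut t x)" and
    c2: "continuous_on ({0..T} \<times> UNIV) (\<lambda>(t, x). ux t x)" and
    c3: "continuous_on ({0..T} \<times> UNIV) (\<lambda>(t, x). uxx t x)" and
    d: "\<forall>t\<in>{0..T}. \<forall>x.
           ((\<lambda>s. u s x) has_real_derivative ut t x) (at t within {0..T}) \<and>
           ((\<lambda>y. u t y) has_real_derivative ux t x) (at x) \<and>
           ((\<lambda>y. ux t y) has_real_derivative uxx t x) (at x)"
    using sm unfolding smooth_kdv_solution_def by metis
  text \<open>By periodicity it suffices to consider \<open>x \<in> [0, L]\<close>, and then \<open>x \<plusminus> h \<in> [-L, 2L]\<close>.\<close>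
  obtain Bt where Bt: "Bt \<ge> 0" "\<And>t x. t \<in> {0..T} \<Longrightarrow> x \<in> {0..L} \<Longrightarrow> \<bar>ut t x\<bar> \<le> Bt"
    using continuous_on_strip_bounded[OF c1] by blast
  obtain B1 where B1: "B1 \<ge> 0" "\<And>t x. t \<in> {0..T} \<Longrightarrow> x \<in> {-L..2*L} \<Longrightarrow> \<bar>ux t x\<bar> \<le> B1"
    using continuous_on_strip_bounded[OF c2] by blast
  obtain B2 where B2: "B2 \<ge> 0" "\<And>t x. t \<in> {0..T} \<Longrightarrow> x \<in> {-L..2*L} \<Longrightarrow> \<bar>uxx t x\<bar> \<le> B2"
    using continuous_on_strip_bounded[OF c3] by blast
  have du: "((\<lambda>y. u t y) has_real_derivative ux t y) (at y within S)"
    and dux: "((\<lambda>y. ux t y) has_real_derivative uxx t y) (at y within S)" if "t \<in> {0..T}" for t y S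
    by (rule has_field_derivative_at_within, use d that in blast)+
  have lip_u: "\<bar>u t b - u t a\<bar> \<le> B1 * \<bar>b - a\<bar>"
    if "t \<in> {0..T}" "a \<in> {-L..2*L}" "b \<in> {-L..2*L}" for t a b
    by (rule lipschitz_of_derivative_bound[where S = "{-L..2*L}" and g' = "ux t"]) (use du B1(2) that in auto)
  have lip_ux: "\<bar>ux t b - ux t a\<bar> \<le> B2 * \<bar>b - a\<bar>"
    if "t \<in> {0..T}" "a \<in> {-L..2*L}" "b \<in> {-L..2*L}" for t a b
    by (rule lipschitz_of_derivative_bound[where S = "{-L..2*L}" and g' = "uxx t"]) (use dux B2(2) that in auto)
  show ?thesis
  proof (rule that[OF Bt(1) B1(1) B2(1)])
    fix t x h assume t: "t \<in> {0..T}" and h: "0 < h" "h \<le> L"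
    obtain x0 where x0: "x0 \<in> {0..L}" "\<And>t c. u t (x + c) = u t (x0 + c)"
      using periodic_reduce_to_period[OF per L] by blast
    have "\<bar>u t (x0+h) - u t x0\<bar> \<le> B1 * \<bar>x0 + h - x0\<bar>" using lip_u[OF t, of x0 "x0+h"] x0(1) h L by auto
    then show "\<bar>u t (x+h) - u t x\<bar> \<le> B1 * h" using x0(2)[of t h] x0(2)[of t 0] h by simp
    have "\<bar>u t (x0+h) - 2 * u t x0 + u t (x0-h)\<bar> \<le> B2 * h^2"
    proof (rule second_difference_le[OF h(1)])
      show "((\<lambda>y. u t y) has_real_derivative ux t y) (at y)" for y using d t by simp
      show "\<bar>ux t s - ux t y\<bar> \<le> B2 * \<bar>s - y\<bar>" if "s \<in> {x0-h..x0+h}" "y \<in> {x0-h..x0+h}" for s y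
        using lip_ux[OF t, of y s] that x0(1) h by auto
    qed
    then show "\<bar>u t (x+h) - 2 * u t x + u t (x-h)\<bar> \<le> B2 * h^2"
      using x0(2)[of t h] x0(2)[of t 0] x0(2)[of t "-h"] by simp
  next
    fix t t' x assume t: "t \<in> {0..T}" and t': "t' \<in> {0..T}"
    obtain x0 where x0: "x0 \<in> {0..L}" "\<And>t c. u t (x + c) = u t (x0 + c)"
      using periodic_reduce_to_period[OF per L] by blast
    have "\<bar>u t' x0 - u t x0\<bar> \<le> Bt * \<bar>t' - t\<bar>"
      by (rule lipschitz_of_derivative_bound[where S = "{0..T}" and g' = "\<lambda>s. ut s x0"]) (use d Bt(2) x0(1) t t' in auto)
    then show "\<bar>u t' x - u t x\<bar> \<le> Bt * \<bar>t' - t\<bar>" using x0(2)[of t 0] x0(2)[of t' 0] by simp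
  qed
qed

section \<open>Error estimate for the scheme\<close>

lemma grid_sample_bounds:
  fixes u :: "real \<Rightarrow> real \<Rightarrow> real" and t dx :: real
  defines "V \<equiv> \<lambda>k. u t (real_of_int k * dx)"
  assumes per: "\<forall>t x. u t (x + L) = u t x" and KL: "real K * dx = L" and dx: "dx > 0" and dxL: "dx \<le> L"
    and G1: "\<And>x h. 0 < h \<Longrightarrow> h \<le> L \<Longrightarrow> \<bar>u t (x+h) - u t x\<bar> \<le> B1 * h"
    and G2: "\<And>x h. 0 < h \<Longrightarrow> h \<le> L \<Longrightarrow> \<bar>u t (x+h) - 2 * u t x + u t (x-h)\<bar> \<le> B2 * h^2"
  shows "periodic_grid K V"
    and "\<forall>k. \<bar>V (k+1) - V k\<bar> \<le> B1 * dx"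
    and "\<forall>k. \<bar>V (k+1) - 2 * V k + V (k-1)\<bar> \<le> B2 * dx^2"
proof -
  have "real_of_int (k + int K) * dx = real_of_int k * dx + L" for k using KL by (simp add: distrib_right)
  then show "periodic_grid K V" using per by (simp add: periodic_grid_def V_def)
  have shift: "(real_of_int k + 1) * dx = real_of_int k * dx + dx" "(real_of_int k - 1) * dx = real_of_int k * dx - dx"
    for k by (simp_all add: distrib_right left_diff_distrib)
  show "\<forall>k. \<bar>V (k+1) - V k\<bar> \<le> B1 * dx" using G1[OF dx dxL] by (simp add: V_def shift)
  show "\<forall>k. \<bar>V (k+1) - 2 * V k + V (k-1)\<bar> \<le> B2 * dx^2" using G2[OF dx dxL] by (simp add: V_def shift)
qed

lemma less_eps2_imp_le_dx_cube:
  assumes "\<beta> \<noteq> 0" and "dx > 0" and "r \<ge> 0" and "q \<ge> 0" and "dt < eps2 \<alpha> \<beta> q r dx"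
  shows "dt \<le> 2 / (3 * \<bar>\<beta>\<bar>) * dx^3"
proof -
  have "eps2 \<alpha> \<beta> q r dx \<le> dx^3 / (3 / 2 * \<bar>\<beta>\<bar>)"
    unfolding eps2_def using assms
    by (intro divide_left_mono) (auto intro!: mult_pos_pos add_nonneg_pos mult_nonneg_nonneg)
  then show ?thesis using assms(5) by (simp add: field_simps)
qed

lemma scheme_error_energy_step:
  fixes \<alpha> \<beta> L T q r :: real and u :: "real \<Rightarrow> real \<Rightarrow> real" and U :: "nat \<Rightarrow> int \<Rightarrow> real"
    and K M m :: nat
  defines "dx \<equiv> L / real K" and "dt \<equiv> T / real M"
  defines "ut \<equiv> \<lambda>m k. u (real m * dt) (real_of_int k * dx)"
  defines "e \<equiv> \<lambda>m k. U m k - ut m k" and "\<tau> \<equiv> trunc_err \<alpha> \<beta> dx dt ut"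
  defines "A \<equiv> \<lambda>m. \<alpha> / (3 * \<beta>) * (\<Sum>k = 1..int K. (e m k)^3 * dx)"
  assumes \<beta>: "\<beta> \<noteq> 0" and L: "L > 0" and T: "T > 0" and q: "q \<ge> 1"
    and per: "\<forall>t x. u t (x + L) = u t x" and ur: "\<forall>t\<in>{0..T}. \<forall>x. \<bar>u t x\<bar> \<le> r"
    and Bt: "Bt \<ge> 0" and B1: "B1 \<ge> 0" and B2: "B2 \<ge> 0"
    and G1: "\<And>t x h. t \<in> {0..T} \<Longrightarrow> 0 < h \<Longrightarrow> h \<le> L \<Longrightarrow> \<bar>u t (x+h) - u t x\<bar> \<le> B1 * h"
    and G2: "\<And>t x h. t \<in> {0..T} \<Longrightarrow> 0 < h \<Longrightarrow> h \<le> L \<Longrightarrow> \<bar>u t (x+h) - 2 * u t x + u t (x-h)\<bar> \<le> B2 * h^2"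
    and Gt: "\<And>t t' x. t \<in> {0..T} \<Longrightarrow> t' \<in> {0..T} \<Longrightarrow> \<bar>u t' x - u t x\<bar> \<le> Bt * \<bar>t' - t\<bar>"
    and K: "K > 0" and M: "M > 0" and m: "Suc m \<le> M"
    and pv: "periodic_grid K (U m)" and pw: "periodic_grid K (U (Suc m))"
    and sch: "scheme_step \<alpha> \<beta> dx dt (U m) (U (Suc m))"
    and sup_v: "supnorm K (U m) \<le> q * r" and sup_w: "supnorm K (U (Suc m)) \<le> q * r"
    and dt_small: "dt < eps2 \<alpha> \<beta> q r dx"
  shows "dtp dt (\<lambda>n. (gnorm K dx (dxp dx (e n)))^2) m
    \<le> - dtp dt A m + energy_constant \<alpha> \<beta> r ((q + 1) * r) B1 B2 (Bt * (2 / (3 * \<bar>\<beta>\<bar>))) L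
          * ((h1norm K dx (e m))^2 + (h1norm K dx (e (Suc m)))^2)
      + (gnorm K dx (dxp dx (\<tau> m)))^2 + \<bar>\<alpha>\<bar> / (6 * \<bar>\<beta>\<bar>) * (gnorm K dx (\<tau> m))^2"
proof -
  have dx: "dx > 0" and dxL: "dx \<le> L" and KL: "real K * dx = L" and dt: "dt > 0"
    using K L M T by (simp_all add: dx_def dt_def field_simps)
  have r: "r \<ge> 0" using ur T by (metis abs_ge_zero atLeastAtMost_iff less_eq_real_def order_trans)
  have times: "real m * dt \<in> {0..T}" "real (Suc m) * dt \<in> {0..T}"
  proof -
    have "real (Suc m) * dt \<le> real M * dt" using m dt by (intro mult_right_mono) auto
    moreover have "real M * dt = T" using M by (simp add: dt_def)
    moreover have "real m * dt \<le> real (Suc m) * dt" using dt by (intro mult_right_mono) auto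
    ultimately show "real m * dt \<in> {0..T}" "real (Suc m) * dt \<in> {0..T}" using dt by auto
  qed
  have V: "periodic_grid K (ut m)" "\<forall>k. \<bar>ut m (k+1) - ut m k\<bar> \<le> B1 * dx"
      "\<forall>k. \<bar>ut m (k+1) - 2 * ut m k + ut m (k-1)\<bar> \<le> B2 * dx^2"
    using grid_sample_bounds[OF per KL dx dxL G1[OF times(1)] G2[OF times(1)]] by (simp_all add: ut_def)
  have W: "periodic_grid K (ut (Suc m))" "\<forall>k. \<bar>ut (Suc m) (k+1) - ut (Suc m) k\<bar> \<le> B1 * dx"
      "\<forall>k. \<bar>ut (Suc m) (k+1) - 2 * ut (Suc m) k + ut (Suc m) (k-1)\<bar> \<le> B2 * dx^2"
    using grid_sample_bounds[OF per KL dx dxL G1[OF times(2)] G2[OF times(2)]] by (simp_all add: ut_def)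
  have hV: "\<forall>k. \<bar>ut m k\<bar> \<le> r" and hW: "\<forall>k. \<bar>ut (Suc m) k\<bar> \<le> r"
    using ur times by (auto simp: ut_def)
  have he: "\<forall>k. \<bar>U n k - ut n k\<bar> \<le> (q + 1) * r"
    if "periodic_grid K (U n)" "supnorm K (U n) \<le> q * r" "\<forall>k. \<bar>ut n k\<bar> \<le> r" for n
  proof
    fix k
    have "\<bar>U n k\<bar> \<le> q * r" using abs_le_supnorm_periodic[OF that(1) K] that(2) by (rule order_trans)
    then show "\<bar>U n k - ut n k\<bar> \<le> (q + 1) * r"
      using that(3) abs_triangle_ineq4[of "U n k" "ut n k"] by (simp add: distrib_right) (meson add_mono order_trans)
  qed
  have hWV: "\<forall>k. \<bar>ut (Suc m) k - ut m k\<bar> \<le> Bt * (2 / (3 * \<bar>\<beta>\<bar>)) * dx^3"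
  proof
    fix k
    have "\<bar>ut (Suc m) k - ut m k\<bar> \<le> Bt * dt"
      using Gt[OF times, of "real_of_int k * dx"] dt by (simp add: ut_def algebra_simps)
    also have "\<dots> \<le> Bt * (2 / (3 * \<bar>\<beta>\<bar>)) * dx^3"
      using mult_left_mono[OF less_eps2_imp_le_dx_cube[OF \<beta> dx r _ dt_small] Bt] q by (simp add: mult.assoc)
    finally show "\<bar>ut (Suc m) k - ut m k\<bar> \<le> Bt * (2 / (3 * \<bar>\<beta>\<bar>)) * dx^3" .
  qed
  have R: "(q + 1) * r \<ge> 0" and c: "Bt * (2 / (3 * \<bar>\<beta>\<bar>)) \<ge> 0" using q r Bt by simp_all
  show ?thesis
    unfolding dtp_def A_def \<tau>_def trunc_err_eq_residual e_def
    using one_step_energy_estimate[OF dx dxL dt \<beta> pv pw V(1) W(1) sch r R B1 B2 c hV hW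
      he[OF pv sup_v hV] he[OF pw sup_w hW] V(2) W(2) V(3) W(3) hWV] .
qed

lemma scheme_error_energy_inequality:
  fixes \<alpha> \<beta> L T q r c0 :: real and u :: "real \<Rightarrow> real \<Rightarrow> real" and U :: "nat \<Rightarrow> int \<Rightarrow> real"
    and K M M0 m :: nat
  defines "dx \<equiv> L / real K" and "dt \<equiv> T / real M"
  defines "ut \<equiv> \<lambda>m k. u (real m * dt) (real_of_int k * dx)"
  defines "e \<equiv> \<lambda>m k. U m k - ut m k" and "\<tau> \<equiv> trunc_err \<alpha> \<beta> dx dt ut"
  defines "A \<equiv> \<lambda>m. \<alpha> / (3 * \<beta>) * (\<Sum>k = 1..int K. (e m k)^3 * dx)"
  assumes \<beta>: "\<beta> \<noteq> 0" and L: "L > 0" and T: "T > 0" and q: "q > 1"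
    and per: "\<forall>t x. u t (x + L) = u t x" and ur: "\<forall>t\<in>{0..T}. \<forall>x. \<bar>u t x\<bar> < r"
    and Bt: "Bt \<ge> 0" and B1: "B1 \<ge> 0" and B2: "B2 \<ge> 0"
    and G1: "\<And>t x h. t \<in> {0..T} \<Longrightarrow> 0 < h \<Longrightarrow> h \<le> L \<Longrightarrow> \<bar>u t (x+h) - u t x\<bar> \<le> B1 * h"
    and G2: "\<And>t x h. t \<in> {0..T} \<Longrightarrow> 0 < h \<Longrightarrow> h \<le> L \<Longrightarrow> \<bar>u t (x+h) - 2 * u t x + u t (x-h)\<bar> \<le> B2 * h^2"
    and Gt: "\<And>t t' x. t \<in> {0..T} \<Longrightarrow> t' \<in> {0..T} \<Longrightarrow> \<bar>u t' x - u t x\<bar> \<le> Bt * \<bar>t' - t\<bar>"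
    and K: "K > 0" and M: "M > 0" and M0M: "M0 < M" and m: "m \<le> M0"
    and pU: "\<forall>n \<le> M0 + 1. periodic_grid K (U n)"
    and sch: "\<forall>n \<le> M0. scheme_step \<alpha> \<beta> dx dt (U n) (U (Suc n))"
    and supU: "\<forall>m \<le> M0. supnorm K (U m) \<le> r" and supM: "supnorm K (U (M0 + 1)) \<le> q * r"
    and dt_small: "dt < min (eps1 \<alpha> \<beta> q r dx) (eps2 \<alpha> \<beta> q r dx)"
    and \<tau>_small: "\<forall>m \<le> M0. gnorm K dx (\<tau> m) \<le> c0 * (dt^2 + dx^2) \<and> gnorm K dx (dxp dx (\<tau> m)) \<le> c0 * (dt^2 + dx^2)"
  shows "dtp dt (\<lambda>n. (gnorm K dx (dxp dx (e n)))^2) m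
    \<le> - dtp dt A m + 2 * energy_constant \<alpha> \<beta> r ((q + 1) * r) B1 B2 (Bt * (2 / (3 * \<bar>\<beta>\<bar>))) L
          * mutp (\<lambda>n. (h1norm K dx (e n))^2) m
      + (\<bar>\<alpha>\<bar> / (6 * \<bar>\<beta>\<bar>) + 1) * c0^2 * (dt^2 + dx^2)^2"
proof -
  let ?C = "energy_constant \<alpha> \<beta> r ((q + 1) * r) B1 B2 (Bt * (2 / (3 * \<bar>\<beta>\<bar>))) L"
  have r: "r \<ge> 0" using ur T by (metis abs_ge_zero atLeastAtMost_iff less_eq_real_def order_trans)
  have qr: "r \<le> q * r" using mult_right_mono[of 1 q r] q r by simp
  have sup_v: "supnorm K (U m) \<le> q * r" using supU m qr by auto
  have sup_w: "supnorm K (U (Suc m)) \<le> q * r"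
    using supU supM m qr by (cases "m = M0") (auto simp: le_Suc_eq dest!: spec[of _ "Suc m"])
  have estimate: "dtp dt (\<lambda>n. (gnorm K dx (dxp dx (e n)))^2) m
      \<le> - dtp dt A m + ?C * ((h1norm K dx (e m))^2 + (h1norm K dx (e (Suc m)))^2)
        + (gnorm K dx (dxp dx (\<tau> m)))^2 + \<bar>\<alpha>\<bar> / (6 * \<bar>\<beta>\<bar>) * (gnorm K dx (\<tau> m))^2"
    unfolding dx_def dt_def A_def e_def \<tau>_def ut_def
  proof (rule scheme_error_energy_step[OF \<beta> L T _ per _ Bt B1 B2 G1 G2 Gt K M])
    show "\<forall>t\<in>{0..T}. \<forall>x. \<bar>u t x\<bar> \<le> r" using ur by (simp add: less_imp_le)
  qed (use q m M0M pU sch sup_v sup_w dt_small in \<open>simp_all add: dx_def dt_def ut_def\<close>)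
  define X where "X = (c0 * (dt^2 + dx^2))^2"
  have "(gnorm K dx (\<tau> m))^2 \<le> X" and \<delta>\<tau>: "(gnorm K dx (dxp dx (\<tau> m)))^2 \<le> X"
    using \<tau>_small m K L by (auto simp: X_def gnorm_def dx_def intro!: power_mono sum_nonneg)
  then have "\<bar>\<alpha>\<bar> / (6 * \<bar>\<beta>\<bar>) * (gnorm K dx (\<tau> m))^2 \<le> \<bar>\<alpha>\<bar> / (6 * \<bar>\<beta>\<bar>) * X"
    by (intro mult_left_mono) auto
  moreover have "(\<bar>\<alpha>\<bar> / (6 * \<bar>\<beta>\<bar>) + 1) * c0^2 * (dt^2 + dx^2)^2 = \<bar>\<alpha>\<bar> / (6 * \<bar>\<beta>\<bar>) * X + X"
    unfolding X_def power_mult_distrib by (simp add: algebra_simps)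
  moreover have "2 * ?C * mutp (\<lambda>n. (h1norm K dx (e n))^2) m = ?C * ((h1norm K dx (e m))^2 + (h1norm K dx (e (Suc m)))^2)"
    by (simp add: mutp_def)
  ultimately show ?thesis using estimate \<delta>\<tau> by linarith
qed

theorem lemma3p5:
  fixes \<alpha> \<beta> L T q r :: real and u :: "real \<Rightarrow> real \<Rightarrow> real"
  assumes "\<beta> \<noteq> 0" and "L > 0" and "T > 0" and "q > 1"
    and "smooth_kdv_solution \<alpha> \<beta> L T u"
    and "\<forall>t\<in>{0..T}. \<forall>x. \<bar>u t x\<bar> < r"
  shows "\<exists>C2 > 0. \<forall>(K::nat) (M::nat) (M0::nat) (U::nat \<Rightarrow> int \<Rightarrow> real) (c0::real).
    (let dx = L / real K; dt = T / real M;
         ut = (\<lambda>m k. u (real m * dt) (real_of_int k * dx));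
         e = (\<lambda>m k. U m k - ut m k);
         \<tau> = trunc_err \<alpha> \<beta> dx dt ut;
         A = (\<lambda>m. \<alpha> / (3 * \<beta>) * (\<Sum>k = 1..int K. (e m k)^3 * dx))
     in K > 0 \<and> M > 0 \<and> M0 < M
        \<and> (\<forall>k. U 0 k = u 0 (real_of_int k * dx))
        \<and> (\<forall>n \<le> M0 + 1. periodic_grid K (U n))
        \<and> (\<forall>n \<le> M0. scheme_step \<alpha> \<beta> dx dt (U n) (U (Suc n)))
        \<and> (\<forall>m \<le> M0. supnorm K (U m) \<le> r)
        \<and> dt < min (eps1 \<alpha> \<beta> q r dx) (eps2 \<alpha> \<beta> q r dx)
        \<and> supnorm K (U (M0 + 1)) \<le> q * r
        \<and> c0 > 0
        \<and> (\<forall>m \<le> M0. gnorm K dx (\<tau> m) \<le> c0 * (dt^2 + dx^2)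
                    \<and> gnorm K dx (dxp dx (\<tau> m)) \<le> c0 * (dt^2 + dx^2))
        \<and> dt \<le> dx
     \<longrightarrow> (\<forall>m \<le> M0.
           dtp dt (\<lambda>n. (gnorm K dx (dxp dx (e n)))^2) m
             \<le> - dtp dt A m + C2 * mutp (\<lambda>n. (h1norm K dx (e n))^2) m
               + (\<bar>\<alpha>\<bar> / (6 * \<bar>\<beta>\<bar>) + 1) * c0^2 * (dt^2 + dx^2)^2))"
proof -
  have per: "\<forall>t x. u t (x + L) = u t x" using assms(5) by (simp add: smooth_kdv_solution_def)
  obtain Bt B1 B2 where Bt: "Bt \<ge> 0" and B1: "B1 \<ge> 0" and B2: "B2 \<ge> 0"
    and G1: "\<And>t x h. t \<in> {0..T} \<Longrightarrow> 0 < h \<Longrightarrow> h \<le> L \<Longrightarrow> \<bar>u t (x+h) - u t x\<bar> \<le> B1 * h"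
    and G2: "\<And>t x h. t \<in> {0..T} \<Longrightarrow> 0 < h \<Longrightarrow> h \<le> L \<Longrightarrow> \<bar>u t (x+h) - 2 * u t x + u t (x-h)\<bar> \<le> B2 * h^2"
    and Gt: "\<And>t t' x. t \<in> {0..T} \<Longrightarrow> t' \<in> {0..T} \<Longrightarrow> \<bar>u t' x - u t x\<bar> \<le> Bt * \<bar>t' - t\<bar>"
    using smooth_kdv_solution_bounds[OF assms(2,5)] by metis
  have "r \<ge> 0" using assms(3,6) by (metis abs_ge_zero atLeastAtMost_iff less_eq_real_def order_trans)
  then have "1 \<le> energy_constant \<alpha> \<beta> r ((q + 1) * r) B1 B2 (Bt * (2 / (3 * \<bar>\<beta>\<bar>))) L"
    using assms(2,4) Bt B1 B2 by (intro energy_constant_ge_1) auto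
  then have C_pos: "0 < 2 * energy_constant \<alpha> \<beta> r ((q + 1) * r) B1 B2 (Bt * (2 / (3 * \<bar>\<beta>\<bar>))) L"
    by simp
  show ?thesis unfolding Let_def
  proof (intro exI conjI allI impI)
    show "0 < 2 * energy_constant \<alpha> \<beta> r ((q + 1) * r) B1 B2 (Bt * (2 / (3 * \<bar>\<beta>\<bar>))) L" by (fact C_pos)
  qed (elim conjE, rule scheme_error_energy_inequality[OF assms(1-4) per assms(6) Bt B1 B2 G1 G2 Gt], assumption+)
qed

end
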